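(* For every $k$ there are complex numbers $\alpha_m(k)$, $m\in\mathbb Z/D\mathbb Z$, such that $$Z^0_k=\sum_{m\in\mathbb Z/D\mathbb Z}\alpha_m(k)\,\Psi_{2km},$$ and $\alpha_0(k)=\frac{i}{\sqrt2}+O(k^{-\infty})$.
   Context: Standing setup. $(E,\omega)$ is a real $2$-dimensional symplectic vector space with a compatible linear complex structure $j$; $K_j=\{\alpha\in E^*\otimes\mathbb C:\alpha(j\cdot)=i\alpha\}$. A half-form line is a complex line $\delta$ with an isomorphism $\varphi:\delta^{\otimes2}\to K_j$; $\delta$ carries the Hermitian metric making $\varphi$ an isometry. For $v\in E\setminus\{0\}$, $\Omega_v$ denotes a vector of $\delta$ with $\varphi(\Omega_v^2)(v)=1$ (unique up to sign). $L\to E$ is the trivial Hermitian line bundle with connection $d-i\alpha$, where $\alpha_x(y)=\frac12\omega(x,y)$, and the compatible holomorphic structure; sections of $L^k\otimes\delta$ are identified with functions $E\to\delta$. For $k\in\mathbb Z_{>0}$ and $x\in E$, $T^*_x$ acts on sections of $L^k\otimes\delta$ by $(T^*_x\Psi)(y)=e^{-\frac{ik}{2}\omega(x,y)}\Psi(x+y)$. For a lattice $\Lambda\subset E$, $\mathcal H^\Lambda_k$ is the space of holomorphic sections $\Psi$ of $L^k\otimes\delta$ with $T^*_x\Psi=\Psi$ for all $x\in\Lambda$, with inner product $\langle\Psi_1,\Psi_2\rangle=\int_F\langle\Psi_1,\Psi_2\rangle_\delta\,|\omega|$ ($F$ a fundamental domain of $\Lambda$). For sequences, $O(k^{-\infty})$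 means $O(k^{-N})$ for every $N$. Knot state. Fix relatively prime positive integers $a,b$; $D=2ab$. Fix a basis $(\lambda,\mu)$ of $E$ with $\omega(\mu,\lambda)=4\pi$. $\mathcal H_k=\mathcal H_k^{\lambda\mathbb Z\oplus\mu\mathbb Z}$; $M=T^*_{\mu/2k}$, $L=T^*_{-\lambda/2k}$ (operators), $q=e^{i\pi/k}$, $q^{s/D}=e^{i\pi s/(kD)}$. Fix $\Omega_\mu$; $(\xi_\ell)_{\ell\in\mathbb Z/2k\mathbb Z}$ is the orthonormal basis of $\mathcal H_k$ with $M\xi_\ell=q^\ell\xi_\ell$, $L\xi_\ell=\xi_{\ell-1}$, $\xi_0(0)\in\mathbb R_{>0}\Omega_\mu$. $Z^0_k=-\frac{i}{2\sqrt k}\sum_{\ell\in\mathbb Z/2k\mathbb Z}\xi_\ell$. Second lattice. $\Omega_\lambda$ is the (fixed, $k$-independent) choice of sign with $Z^0_k(0)=\frac{e^{3i\pi/4}}{\sqrt2}(\frac{k}{2\pi})^{1/4}\Omega_\lambda+O(k^{-\infty})$. $R_D=D\mu\mathbb Z\oplus\lambda\mathbb Z$, $\mathcal H_{D,k}=\mathcal H_k^{R_D}\supset\mathcal H_k$ ($\dim=2kD$). $S=T^*_{-\lambda/2kD}$, $R=T^*_{(D\mu-2\lambda)/2kD}$. $(\Psi_n)_{n\in\mathbb Z/2kD\mathbb Z}$ is the orthonormal basis of $\mathcal H_{D,k}$ with $S\Psi_n=q^{n/D}\Psi_n$, $R\Psi_n=\Psi_{n+1}$ and phase such that $\Psi_0(0)=e^{i\pi/4}(\frac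 k{2\pi})^{1/4}\Omega_\lambda+O(k^{-\infty})$. *)

theory Defs
  imports "HOL-Analysis.Analysis"
begin

text \<open>Concrete model (up to isomorphism) of the standing setup:
  E = complex plane as a real 2-dimensional vector space, j = multiplication by i,
  omega(x,y) = Im(cnj x * y)  (so omega(x, j x) = |x|^2 > 0, compatible).
  K_j = complex-linear functionals y |-> c*y, with the metric induced by g = omega(.,j.),
  so that |c dz| = sqrt 2 |c|.
  Half-form line: delta = complex numbers with phi(u (x) u')(y) = u*u'*y / sqrt 2;
  the metric making phi an isometry is then the standard one |u|.
  Sections of L^k (x) delta are functions complex => complex.\<close>

definition omega :: "complex \<Rightarrow> complex \<Rightarrow> real" where
  "omega x y = Im (cnj x * y)"

text \<open>phi(Omega^2)(v) as an element of K_j evaluated at v.\<close>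
definition phi_sq :: "complex \<Rightarrow> complex \<Rightarrow> complex" where
  "phi_sq u v = u^2 * v / complex_of_real (sqrt 2)"

text \<open>Holomorphic sections of L^k (x) delta, where L has connection d - i alpha,
  alpha_x(y) = omega(x,y)/2: the (0,1)-part of the covariant derivative is
  dbar + (k/4) z dzbar, whose kernel consists of exp(-k|z|^2/4) times entire functions.\<close>
definition hol_sec :: "nat \<Rightarrow> (complex \<Rightarrow> complex) \<Rightarrow> bool" where
  "hol_sec k f \<longleftrightarrow> (\<exists>g. g holomorphic_on UNIV \<and>
      (\<forall>z. f z = exp (complex_of_real (- real k * (cmod z)^2 / 4)) * g z))"

definition Tstar :: "nat \<Rightarrow> complex \<Rightarrow> (complex \<Rightarrow> complex) \<Rightarrow> (complex \<Rightarrow> complex)" where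
  "Tstar k x f = (\<lambda>y. exp (- \<i> * complex_of_real (real k / 2 * omega x y)) * f (x + y))"

definition lattice :: "complex \<Rightarrow> complex \<Rightarrow> complex set" where
  "lattice u v = {of_int m * u + of_int n * v | m n. True}"

definition fund_dom :: "complex \<Rightarrow> complex \<Rightarrow> complex set" where
  "fund_dom u v = {of_real s * u + of_real t * v | s t. 0 \<le> s \<and> s < 1 \<and> 0 \<le> t \<and> t < 1}"

definition Hspace :: "nat \<Rightarrow> complex \<Rightarrow> complex \<Rightarrow> (complex \<Rightarrow> complex) set" where
  "Hspace k u v = {f. hol_sec k f \<and> (\<forall>x\<in>lattice u v. Tstar k x f = f)}"

text \<open>Inner product: integral over a fundamental domain w.r.t. |omega| = Lebesgue measure.\<close>
definition ip :: "complex \<Rightarrow> complex \<Rightarrow> (complex \<Rightarrow> complex) \<Rightarrow> (complex \<Rightarrow> complex) \<Rightarrow> complex" where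
  "ip u v f g = (LINT z:fund_dom u v|lborel. f z * cnj (g z))"

text \<open>(e k)_{n in Z/NZ} (indexed by int, N-periodic) is an orthonormal basis of the
  given space H of functions.\<close>
definition is_onb :: "(complex \<Rightarrow> complex) set \<Rightarrow> complex \<Rightarrow> complex \<Rightarrow> nat \<Rightarrow> (int \<Rightarrow> complex \<Rightarrow> complex) \<Rightarrow> bool" where
  "is_onb H u v N e \<longleftrightarrow>
     (\<forall>n. e (n + int N) = e n) \<and>
     (\<forall>n. e n \<in> H) \<and>
     (\<forall>n\<in>{0..<int N}. \<forall>m\<in>{0..<int N}. ip u v (e n) (e m) = (if n = m then 1 else 0)) \<and>
     (\<forall>f\<in>H. \<exists>c. f = (\<lambda>z. \<Sum>n\<in>{0..<int N}. c n * e n z))"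

definition O_inf :: "(nat \<Rightarrow> complex) \<Rightarrow> bool" where
  "O_inf f \<longleftrightarrow> (\<forall>N::nat. \<exists>C. \<forall>\<^sub>F k in sequentially. cmod (f k) \<le> C * real k powr (- real N))"

end

theory Submission
  imports Defs
begin

(* Write Z = Z^0_k, (Psi n) for the basis of H_{D,k} and
   Phi j = T*_{j mu} (Psi 0).
   (1) Expansion.  Z lies in H_k, a subspace of H_{D,k}, and is invariant under
       L = T*_{-lam/2k}.  On Psi n the operator L acts by a 2k-th root of unity, so
       averaging over the powers of L keeps only the modes Psi (2km).  Since
       Phi m is a phase times Psi (2km) and Z is mu-invariant, all coefficients
       agree: Z = B_k * (Sum_{j<D} Phi j), which yields the expansion with
       alpha_m(k) = B_k * exp(-4 pi i k m^2/D).
   (2) A theta series.  Periodising along D mu a Gaussian which is invariant under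
       all translations by real multiples of lam gives a section G in H_{D,k}
       invariant under S; hence G = d * Psi 0.  Gaussian estimates give
       G 0 = 1 + O(e^{-ck}) and G (j mu) = O(e^{-ck}) for 0 < j < D, so
       Sum_j Psi 0 (j mu) = Psi 0 0 * (1 + sigma_k) with sigma = O(k^-inf).
   (3) Evaluating Z = B_k * Sum_j Phi j at the origin and inserting the given
       asymptotics of Z 0 and Psi 0 0 yields B_k = i/sqrt 2 + O(k^-inf). *)

section \<open>The symplectic form and the Heisenberg translations\<close>

lemma omega_add_left: "omega (x + y) z = omega x z + omega y z"
  by (simp add: omega_def algebra_simps)

lemma omega_add_right: "omega x (y + z) = omega x y + omega x z"
  by (simp add: omega_def algebra_simps)

lemma omega_scale_left: "omega (of_real r * x) z = r * omega x z"
  by (simp add: omega_def algebra_simps)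

lemma omega_scale_right: "omega x (of_real r * z) = r * omega x z"
  by (simp add: omega_def algebra_simps)

lemma omega_int_left: "omega (of_int n * x) y = of_int n * omega x y"
  by (simp add: omega_def algebra_simps)

lemma omega_int_right: "omega x (of_int n * y) = of_int n * omega x y"
  by (simp add: omega_def algebra_simps)

lemma omega_swap: "omega y x = - omega x y"
  by (simp add: omega_def algebra_simps)

text \<open>Multiples of one vector are symplectically orthogonal; this makes the
  corresponding translations commute exactly.\<close>
lemma omega_int_mult: "omega (of_int m * x) (of_int j * x) = 0"
  by (simp add: omega_def algebra_simps)

lemma basis_lam_nonzero: "omega mu lam = 4 * pi \<Longrightarrow> lam \<noteq> 0"
  by (auto simp: omega_def)

lemma omega_zero_right [simp]: "omega x 0 = 0"
  by (simp add: omega_def)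

lemma omega_lam_mu: "omega mu lam = 4 * pi \<Longrightarrow> omega lam mu = - 4 * pi"
  using omega_swap[of lam mu] by simp

lemma omega_lam_Dmu:
  assumes "omega mu lam = 4 * pi"
  shows "omega lam (of_nat D * mu) = - 4 * pi * real D"
  using omega_scale_right[of lam "real D" mu] omega_lam_mu[OF assms] by simp

lemma exp_mult_shuffle:
  fixes a b c d :: complex
  assumes "a + b = c + d"
  shows "exp a * (exp b * F) = exp c * (exp d * F)"
  by (metis assms exp_add mult.assoc)

lemma Tstar_comp:
  "Tstar k x (Tstar k y f)
     = (\<lambda>z. exp (- \<i> * complex_of_real (real k / 2 * omega y x)) * Tstar k (x + y) f z)"
proof
  fix z
  have e: "- \<i> * complex_of_real (real k / 2 * omega x z) + - \<i> * complex_of_real (real k / 2 * omega y (x + z))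
     = - \<i> * complex_of_real (real k / 2 * omega y x) + - \<i> * complex_of_real (real k / 2 * omega (x+y) z)"
    by (simp add: omega_add_left omega_add_right algebra_simps)
  have "Tstar k x (Tstar k y f) z = exp (- \<i> * complex_of_real (real k / 2 * omega x z)) *
      (exp (- \<i> * complex_of_real (real k / 2 * omega y (x + z))) * f (x + y + z))"
    by (simp add: Tstar_def add_ac)
  also have "\<dots> = exp (- \<i> * complex_of_real (real k / 2 * omega y x)) *
      (exp (- \<i> * complex_of_real (real k / 2 * omega (x+y) z)) * f (x + y + z))"
    by (rule exp_mult_shuffle[OF e])
  finally show "Tstar k x (Tstar k y f) z
      = exp (- \<i> * complex_of_real (real k / 2 * omega y x)) * Tstar k (x + y) f z"
    by (simp add: Tstar_def add_ac)
qed

lemma Tstar_comp0: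
  assumes "omega y x = 0"
  shows "Tstar k x (Tstar k y f) = Tstar k (x + y) f"
  using assms by (simp add: Tstar_comp)

lemma Tstar_zero [simp]: "Tstar k 0 f = f"
  by (simp add: Tstar_def omega_def)

lemma Tstar_at0: "Tstar k x f 0 = f x"
  by (simp add: Tstar_def)

lemma Tstar_cmult: "Tstar k x (\<lambda>z. c * f z) = (\<lambda>z. c * Tstar k x f z)"
  by (simp add: Tstar_def fun_eq_iff algebra_simps)

lemma Tstar_sum: "Tstar k x (\<lambda>z. \<Sum>n\<in>A. f n z) = (\<lambda>z. \<Sum>n\<in>A. Tstar k x (f n) z)"
  by (simp add: Tstar_def fun_eq_iff sum_distrib_left)

lemma Tstar_infsum: "Tstar k x (\<lambda>z. \<Sum>\<^sub>\<infinity>n. f n z) = (\<lambda>z. \<Sum>\<^sub>\<infinity>n. Tstar k x (f n) z)"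
  by (simp add: Tstar_def infsum_cmult_right')

lemma norm_Tstar: "cmod (Tstar k x f y) = cmod (f (x + y))"
proof -
  have "cmod (exp (- \<i> * complex_of_real (real k / 2 * omega x y))) = 1"
    by (simp add: norm_exp)
  then show ?thesis by (simp add: Tstar_def norm_mult)
qed

lemma Tstar_pow_eig:
  assumes "Tstar k x f = (\<lambda>z. w * f z)"
  shows "Tstar k (of_nat j * x) f = (\<lambda>z. w ^ j * f z)"
proof (induction j)
  case (Suc j)
  have "Tstar k (of_nat (Suc j) * x) f = Tstar k x (Tstar k (of_nat j * x) f)"
    using Tstar_comp0[of "of_nat j * x" x k f] omega_int_mult[of "int j" x 1]
    by (simp add: algebra_simps)
  also have "\<dots> = (\<lambda>z. w ^ Suc j * f z)"
    using assms by (simp only: Suc.IH Tstar_cmult) (simp add: mult_ac)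
  finally show ?case .
qed simp

lemma Tstar_pow_shift:
  assumes "\<And>n. Tstar k x (e n) = e (n + 1)"
  shows "Tstar k (of_nat j * x) (e n) = e (n + int j)"
proof (induction j)
  case (Suc j)
  have "Tstar k (of_nat (Suc j) * x) (e n) = Tstar k x (Tstar k (of_nat j * x) (e n))"
    using Tstar_comp0[of "of_nat j * x" x k "e n"] omega_int_mult[of "int j" x 1]
    by (simp add: algebra_simps)
  also have "\<dots> = e (n + int (Suc j))"
    using Suc assms by (simp add: algebra_simps)
  finally show ?case .
qed simp


section \<open>Periodic sums and averaging over roots of unity\<close>

lemma periodic_int_mod:
  fixes f :: "int \<Rightarrow> 'a"
  assumes N: "N > 0" and p: "\<And>x. f (x + N) = f x"
  shows "f x = f (x mod N)"
proof -
  have pos: "f (y + int n * N) = f y" for y n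
    by (induction n) (auto simp: algebra_simps p[of "y + int _ * N", simplified algebra_simps] p)
  have all: "f (y + q * N) = f y" for y q
  proof (cases "q \<ge> 0")
    case True then show ?thesis using pos[of y "nat q"] by simp
  next
    case False then show ?thesis using pos[of "y + q * N" "nat (-q)"] by simp
  qed
  show ?thesis using all[of "x mod N" "x div N"] by simp
qed

lemma periodic_shift_sum:
  fixes f :: "int \<Rightarrow> 'a::comm_monoid_add"
  assumes N: "N > 0" and p: "\<And>x. f (x + N) = f x"
  shows "(\<Sum>l\<in>{0..<N}. f (l + a)) = (\<Sum>l\<in>{0..<N}. f l)"
proof (rule sum.reindex_bij_witness[where i = "\<lambda>l. (l - a) mod N" and j = "\<lambda>l. (l + a) mod N"])
  show "((l + a) mod N - a) mod N = l" if "l \<in> {0..<N}" for l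
    using that by (simp add: mod_diff_left_eq)
  show "((l - a) mod N + a) mod N = l" if "l \<in> {0..<N}" for l
    using that by (simp add: mod_add_left_eq)
  show "f ((l + a) mod N) = f (l + a)" for l
    using periodic_int_mod[where f=f, OF N p] by metis
qed (use N in auto)

lemma sum_multiples_reindex:
  fixes F :: "int \<Rightarrow> 'a::comm_monoid_add" and K M :: nat
  assumes K: "0 < K"
  shows "(\<Sum>n\<in>{0..<int (K * M)}. if int K dvd n then F n else 0) = (\<Sum>m\<in>{0..<int M}. F (int K * m))"
proof -
  have "(\<Sum>n\<in>{0..<int (K * M)}. if int K dvd n then F n else 0)
      = (\<Sum>n\<in>{n\<in>{0..<int (K * M)}. int K dvd n}. F n)"
    by (metis (no_types) finite_atLeastLessThan_int sum.inter_filter)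
  also have "{n\<in>{0..<int (K * M)}. int K dvd n} = (\<lambda>m. int K * m) ` {0..<int M}"
  proof (rule set_eqI, rule iffI)
    fix n assume n: "n \<in> {n\<in>{0..<int (K * M)}. int K dvd n}"
    then obtain q where q: "n = int K * q" by (auto elim: dvdE)
    have "0 \<le> q" using n q K by (simp add: zero_le_mult_iff)
    moreover have "q < int M" using n q K by simp
    ultimately show "n \<in> (\<lambda>m. int K * m) ` {0..<int M}" using q by auto
  qed (use K in auto)
  also have "(\<Sum>n\<in>(\<lambda>m. int K * m) ` {0..<int M}. F n) = (\<Sum>m\<in>{0..<int M}. F (int K * m))"
    using K by (subst sum.reindex) (auto simp: inj_on_def)
  finally show ?thesis .
qed

lemma exp_root_eq_1:
  assumes "0 < K"
  shows "exp (\<i> * of_real pi * of_int n / of_nat K) = 1 \<longleftrightarrow> int (2 * K) dvd n"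
proof -
  have "exp (\<i> * of_real pi * of_int n / of_nat K) = 1
        \<longleftrightarrow> (\<exists>m::int. pi * of_int n / of_nat K = of_int (2 * m) * pi)"
    by (simp add: exp_eq_1)
  also have "\<dots> \<longleftrightarrow> (\<exists>m::int. n = 2 * int K * m)"
  proof -
    have "pi * of_int n / of_nat K = of_int (2 * m) * pi \<longleftrightarrow> n = 2 * int K * m" for m :: int
    proof -
      have "pi * of_int n / of_nat K = of_int (2 * m) * pi \<longleftrightarrow> real_of_int n = real_of_int (2 * int K * m)"
        using assms by (auto simp: field_simps)
      then show ?thesis by linarith
    qed
    then show ?thesis by simp
  qed
  also have "\<dots> \<longleftrightarrow> int (2 * K) dvd n" by (auto simp: dvd_def mult_ac)
  finally show ?thesis .
qed

lemma exp_root_pow: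
  assumes "0 < p"
  shows "exp (\<i> * of_real pi * of_int n / of_nat (K * p)) ^ p = exp (\<i> * of_real pi * of_int n / of_nat K)"
proof -
  have "exp (\<i> * of_real pi * of_int n / of_nat (K * p)) ^ p
      = exp (of_nat p * (\<i> * of_real pi * of_int n / of_nat (K * p)))"
    by (rule exp_of_nat_mult[symmetric])
  also have "of_nat p * (\<i> * of_real pi * of_int n / of_nat (K * p)) = \<i> * of_real pi * of_int n / of_nat K"
    using assms by (simp add: field_simps)
  finally show ?thesis .
qed

lemma exp_root_full:
  assumes "0 < K"
  shows "exp (\<i> * of_real pi * of_int n / of_nat K) ^ (2 * K) = 1"
proof -
  have "exp (\<i> * of_real pi * of_int n / of_nat K) ^ (2 * K)
      = exp (\<i> * of_real pi * of_int (2 * n * int K) / of_nat K)"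
    using assms by (simp add: exp_of_nat_mult[symmetric] field_simps)
  also have "\<dots> = 1"
    using assms by (subst exp_root_eq_1) auto
  finally show ?thesis .
qed

lemma average_roots_of_unity:
  fixes F :: "complex \<Rightarrow> complex" and e :: "int \<Rightarrow> complex \<Rightarrow> complex"
  assumes N: "N > 0"
    and F: "\<And>j. j < N \<Longrightarrow> F = (\<lambda>z. \<Sum>n\<in>A. c n * w n ^ j * e n z)"
    and w: "\<And>n. n \<in> A \<Longrightarrow> w n ^ N = 1"
  shows "F = (\<lambda>z. \<Sum>n\<in>A. (if w n = 1 then c n * e n z else 0))"
proof
  fix z
  have geom: "(\<Sum>j<N. w n ^ j) = (if w n = 1 then of_nat N else 0)" if "n \<in> A" for n
    using w[OF that] by (simp add: sum_gp_strict)
  have "of_nat N * F z = (\<Sum>j<N. F z)"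
    by simp
  also have "\<dots> = (\<Sum>j<N. \<Sum>n\<in>A. c n * w n ^ j * e n z)"
    using F by (intro sum.cong) auto
  also have "\<dots> = (\<Sum>n\<in>A. c n * e n z * (\<Sum>j<N. w n ^ j))"
    by (subst sum.swap) (simp add: sum_distrib_left mult_ac)
  also have "\<dots> = (\<Sum>n\<in>A. c n * e n z * (if w n = 1 then of_nat N else 0))"
    using geom by (intro sum.cong) auto
  also have "\<dots> = of_nat N * (\<Sum>n\<in>A. (if w n = 1 then c n * e n z else 0))"
    by (simp add: sum_distrib_left mult.commute if_distrib cong: if_cong)
  finally show "F z = (\<Sum>n\<in>A. (if w n = 1 then c n * e n z else 0))"
    using N by simp
qed

lemma invariant_component:
  fixes e :: "int \<Rightarrow> complex \<Rightarrow> complex"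
  assumes N: "0 < N"
    and F: "F = (\<lambda>z. \<Sum>n\<in>A. c n * e n z)"
    and F_inv: "Tstar k x F = F"
    and e_eig: "\<And>n. Tstar k x (e n) = (\<lambda>z. w n * e n z)"
    and w: "\<And>n. n \<in> A \<Longrightarrow> w n ^ N = 1"
  shows "F = (\<lambda>z. \<Sum>n\<in>A. (if w n = 1 then c n * e n z else 0))"
proof (rule average_roots_of_unity[OF N _ w])
  fix j
  have "F = Tstar k (of_nat j * x) F"
    using Tstar_pow_eig[of k x F 1 j] F_inv by simp
  also have "\<dots> = (\<lambda>z. \<Sum>n\<in>A. c n * w n ^ j * e n z)"
    unfolding F by (simp only: Tstar_sum Tstar_cmult Tstar_pow_eig[OF e_eig]) (simp add: mult_ac)
  finally show "F = (\<lambda>z. \<Sum>n\<in>A. c n * w n ^ j * e n z)" .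
qed (use w in auto)


section \<open>Lattice-invariant sections and the basis Psi\<close>

lemma hol_sec_lincomb:
  assumes "finite A" "\<And>n. n \<in> A \<Longrightarrow> hol_sec k (e n)"
  shows "hol_sec k (\<lambda>z. \<Sum>n\<in>A. c n * e n z)"
proof -
  obtain g where g: "\<And>n. n \<in> A \<Longrightarrow> g n holomorphic_on UNIV"
    "\<And>n z. n \<in> A \<Longrightarrow> e n z = exp (complex_of_real (- real k * (cmod z)^2 / 4)) * g n z"
    using assms(2) unfolding hol_sec_def by metis
  have "(\<lambda>z. \<Sum>n\<in>A. c n * g n z) holomorphic_on UNIV"
    using g(1) by (intro holomorphic_intros) auto
  moreover have "(\<Sum>n\<in>A. c n * e n z)
      = exp (complex_of_real (- real k * (cmod z)^2 / 4)) * (\<Sum>n\<in>A. c n * g n z)" for z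
  proof -
    have "(\<Sum>n\<in>A. c n * e n z) = (\<Sum>n\<in>A. exp (complex_of_real (- real k * (cmod z)^2 / 4)) * (c n * g n z))"
      by (rule sum.cong) (auto simp: g(2))
    then show ?thesis by (simp add: sum_distrib_left)
  qed
  ultimately show ?thesis unfolding hol_sec_def by blast
qed

lemma Hspace_lincomb:
  assumes "finite A" "\<And>n. n \<in> A \<Longrightarrow> e n \<in> Hspace k u v"
  shows "(\<lambda>z. \<Sum>n\<in>A. c n * e n z) \<in> Hspace k u v"
proof -
  have "hol_sec k (\<lambda>z. \<Sum>n\<in>A. c n * e n z)"
    using assms by (intro hol_sec_lincomb) (auto simp: Hspace_def)
  moreover have "Tstar k x (\<lambda>z. \<Sum>n\<in>A. c n * e n z) = (\<lambda>z. \<Sum>n\<in>A. c n * e n z)"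
    if "x \<in> lattice u v" for x
    using assms(2) that by (simp add: Tstar_sum Tstar_cmult Hspace_def)
  ultimately show ?thesis by (simp add: Hspace_def)
qed

lemma Hspace_lattice_inv:
  assumes "f \<in> Hspace k u v"
  shows "Tstar k (of_int m * u + of_int n * v) f = f"
  using assms by (auto simp: Hspace_def lattice_def)

lemma Hspace_sublattice:
  assumes "f \<in> Hspace k lam mu"
  shows "f \<in> Hspace k (of_nat D * mu) lam"
proof -
  have "lattice (of_nat D * mu) lam \<subseteq> lattice lam mu"
  proof
    fix x assume "x \<in> lattice (of_nat D * mu) lam"
    then obtain m n where "x = of_int m * (of_nat D * mu) + of_int n * lam"
      by (auto simp: lattice_def)
    then have "x = of_int n * lam + of_int (m * int D) * mu" by (simp add: algebra_simps)
    then show "x \<in> lattice lam mu" unfolding lattice_def by blast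
  qed
  then show ?thesis using assms by (auto simp: Hspace_def)
qed

text \<open>Invariant vectors in a space with a basis diagonalising a translation x with
  eigenvalues exp(i pi n/(kD)): invariance under p x (where kD = K p) kills every
  mode except Psi (2Km), m < p.  With p = D this selects the modes Psi (2km), and
  with p = 1 it shows that an S-invariant vector is a multiple of Psi 0.\<close>
lemma onb_invariant_modes:
  fixes Psi :: "int \<Rightarrow> complex \<Rightarrow> complex"
  assumes K: "0 < K" and p: "0 < p" and kD: "k * D = K * p"
    and Psi_onb: "is_onb H u v (2 * k * D) Psi"
    and Psi_S: "\<And>n. Tstar k x (Psi n) = (\<lambda>z. exp (\<i> * of_real pi * of_int n / of_nat (k * D)) * Psi n z)"
    and F: "F \<in> H"
    and F_inv: "Tstar k (of_nat p * x) F = F"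
  shows "\<exists>c. F = (\<lambda>z. \<Sum>m\<in>{0..<int p}. c m * Psi (2 * int K * m) z)"
proof -
  obtain c where c: "F = (\<lambda>z. \<Sum>n\<in>{0..<int (2 * K * p)}. c n * Psi n z)"
    using Psi_onb F kD unfolding is_onb_def by (metis mult.assoc)
  define w where "w n = exp (\<i> * of_real pi * of_int n / of_nat K)" for n
  have eig: "Tstar k (of_nat p * x) (Psi n) = (\<lambda>z. w n * Psi n z)" for n
    using Tstar_pow_eig[OF Psi_S, of p] exp_root_pow[OF p, of n K] by (simp add: w_def kD)
  have "F = (\<lambda>z. \<Sum>n\<in>{0..<int (2 * K * p)}. if w n = 1 then c n * Psi n z else 0)"
    by (rule invariant_component[OF _ c F_inv eig, of "2 * K"]) (use K exp_root_full in \<open>auto simp: w_def\<close>)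
  also have "\<dots> = (\<lambda>z. \<Sum>n\<in>{0..<int (2 * K * p)}. if int (2 * K) dvd n then c n * Psi n z else 0)"
    using exp_root_eq_1[OF K] by (simp add: w_def)
  also have "\<dots> = (\<lambda>z. \<Sum>m\<in>{0..<int p}. c (2 * int K * m) * Psi (2 * int K * m) z)"
  proof
    fix z
    show "(\<Sum>n\<in>{0..<int (2 * K * p)}. if int (2 * K) dvd n then c n * Psi n z else 0)
        = (\<Sum>m\<in>{0..<int p}. c (2 * int K * m) * Psi (2 * int K * m) z)"
      using sum_multiples_reindex[of "2 * K" "\<lambda>n. c n * Psi n z" p] K by simp
  qed
  finally have F_modes: "F = (\<lambda>z. \<Sum>m\<in>{0..<int p}. c (2 * int K * m) * Psi (2 * int K * m) z)" .
  show ?thesis by (rule exI[of _ "\<lambda>m. c (2 * int K * m)"]) (simp add: F_modes)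
qed

text \<open>Translating Psi 0 by m mu lands, up to a Gaussian phase, on Psi (2km): the
  vector 2km R differs from m mu by a multiple of lam/(2kD), under which Psi 0 is
  invariant.\<close>
lemma Tstar_mu_Psi0:
  fixes Psi :: "int \<Rightarrow> complex \<Rightarrow> complex"
  assumes k: "0 < k" and D: "0 < D"
    and basis: "omega mu lam = 4 * pi"
    and Psi_S: "\<And>n. Tstar k (- lam / of_nat (2 * k * D)) (Psi n)
                 = (\<lambda>z. exp (\<i> * of_real pi * of_int n / of_nat (k * D)) * Psi n z)"
    and Psi_R: "\<And>n. Tstar k ((of_nat D * mu - 2 * lam) / of_nat (2 * k * D)) (Psi n) = Psi (n + 1)"
  shows "Tstar k (of_nat m * mu) (Psi 0)
       = (\<lambda>z. exp (- (4 * of_real pi * \<i> * of_nat k * of_nat m ^ 2 / of_nat D)) * Psi (2 * int k * int m) z)"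
proof -
  define s where "s = of_nat (4*k*m) * (- lam / of_nat (2 * k * D))"
  have R: "Tstar k (of_nat m * mu + s) (Psi 0) = Psi (2 * int k * int m)"
  proof -
    define r where "r = (of_nat D * mu - 2 * lam) / of_nat (2 * k * D)"
    have "Tstar k (of_nat (2*k*m) * r) (Psi 0) = Psi (0 + int (2*k*m))"
      by (rule Tstar_pow_shift) (unfold r_def, rule Psi_R)
    moreover have "of_nat (2*k*m) * r = of_nat m * mu + s"
      using k D by (simp add: r_def s_def field_simps)
    ultimately show ?thesis by simp
  qed
  have S: "Tstar k s (Psi 0) = Psi 0"
    using Tstar_pow_eig[of k "- lam / of_nat (2 * k * D)" "Psi 0" 1 "4*k*m"] Psi_S[of 0]
    by (simp add: s_def)
  have om: "omega s (of_nat m * mu) = 8 * pi * real m ^ 2 / real D"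
  proof -
    have s_eq: "s = of_real (- 2 * real m / real D) * lam"
      using k D by (simp add: s_def field_simps)
    have "omega s (of_nat m * mu) = omega (of_real (- 2 * real m / real D) * lam) (of_real (real m) * mu)"
      by (simp add: s_eq)
    also have "\<dots> = (- 2 * real m / real D) * (real m * omega lam mu)"
      by (simp only: omega_scale_left omega_scale_right) (simp only: mult_ac)
    also have "\<dots> = 8 * pi * real m ^ 2 / real D"
      using D by (simp add: omega_lam_mu[OF basis] power2_eq_square field_simps)
    finally show ?thesis .
  qed
  have "Tstar k (of_nat m * mu) (Psi 0) = Tstar k (of_nat m * mu) (Tstar k s (Psi 0))"
    by (simp only: S)
  also have "\<dots> = (\<lambda>z. exp (- \<i> * complex_of_real (real k / 2 * (8 * pi * real m ^ 2 / real D)))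
                        * Psi (2 * int k * int m) z)"
    by (simp only: Tstar_comp om R)
  also have "\<dots> = (\<lambda>z. exp (- (4 * of_real pi * \<i> * of_nat k * of_nat m ^ 2 / of_nat D))
                        * Psi (2 * int k * int m) z)"
    by (simp add: field_simps)
  finally show ?thesis .
qed

section \<open>Expansion of the knot state\<close>

definition orbit_sum :: "nat \<Rightarrow> nat \<Rightarrow> complex \<Rightarrow> (complex \<Rightarrow> complex) \<Rightarrow> complex \<Rightarrow> complex" where
  "orbit_sum k D v f z = (\<Sum>j\<in>{0..<int D}. Tstar k (of_int j * v) f z)"

lemma invariant_orbit_combination:
  assumes D: "0 < D"
    and Z: "Z = (\<lambda>z. \<Sum>m\<in>{0..<int D}. beta m * Tstar k (of_int m * v) f z)"
    and f_per: "Tstar k (of_nat D * v) f = f"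
    and Z_inv: "\<And>j. Tstar k (of_int j * v) Z = Z"
  shows "Z = (\<lambda>z. (\<Sum>m\<in>{0..<int D}. beta m) / of_nat D * orbit_sum k D v f z)"
proof
  fix z
  define Phi where "Phi j = Tstar k (of_int j * v) f" for j
  have Phi_shift: "Tstar k (of_int j * v) (Phi m) = Phi (m + j)" for j m
    using Tstar_comp0[OF omega_int_mult, of k j v m f] by (simp add: Phi_def algebra_simps)
  have Phi_per: "Phi (m + int D) = Phi m" for m
    using Phi_shift[of "int D" 0] Phi_shift[of m "int D"] f_per by (simp add: Phi_def add.commute)
  have "of_nat D * Z z = (\<Sum>j\<in>{0..<int D}. Tstar k (of_int j * v) Z z)"
    by (simp add: Z_inv)
  also have "\<dots> = (\<Sum>j\<in>{0..<int D}. \<Sum>m\<in>{0..<int D}. beta m * Phi (m + j) z)"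
    unfolding Z by (simp add: Tstar_sum Tstar_cmult Phi_shift flip: Phi_def)
  also have "\<dots> = (\<Sum>m\<in>{0..<int D}. beta m * (\<Sum>j\<in>{0..<int D}. (\<lambda>j. Phi j z) (j + m)))"
    by (subst sum.swap) (simp add: sum_distrib_left add.commute)
  also have "\<dots> = (\<Sum>m\<in>{0..<int D}. beta m * (\<Sum>j\<in>{0..<int D}. Phi j z))"
    using periodic_shift_sum[of "int D" "\<lambda>j. Phi j z"] D Phi_per by simp
  finally show "Z z = (\<Sum>m\<in>{0..<int D}. beta m) / of_nat D * orbit_sum k D v f z"
    using D by (simp add: orbit_sum_def Phi_def sum_distrib_right field_simps)
qed

lemma orbit_sum_Psi0:
  fixes Psi :: "int \<Rightarrow> complex \<Rightarrow> complex"
  assumes k: "0 < k" and D: "0 < D"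
    and basis: "omega mu lam = 4 * pi"
    and Psi_S: "\<And>n. Tstar k (- lam / of_nat (2 * k * D)) (Psi n)
                 = (\<lambda>z. exp (\<i> * of_real pi * of_int n / of_nat (k * D)) * Psi n z)"
    and Psi_R: "\<And>n. Tstar k ((of_nat D * mu - 2 * lam) / of_nat (2 * k * D)) (Psi n) = Psi (n + 1)"
  shows "orbit_sum k D mu (Psi 0) z
       = (\<Sum>m\<in>{0..<int D}. exp (- (4 * of_real pi * \<i> * of_nat k * of_int m ^ 2 / of_nat D))
                            * Psi (2 * int k * m) z)"
  unfolding orbit_sum_def
proof (rule sum.cong[OF refl])
  fix m assume "m \<in> {0..<int D}"
  then have m_int: "int (nat m) = m" and m_complex: "(of_nat (nat m) :: complex) = of_int m"
    by simp_all
  have "Tstar k (of_nat (nat m) * mu) (Psi 0) z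
      = exp (- (4 * of_real pi * \<i> * of_nat k * of_nat (nat m) ^ 2 / of_nat D)) * Psi (2 * int k * int (nat m)) z"
    by (simp only: Tstar_mu_Psi0[OF k D basis Psi_S Psi_R])
  then show "Tstar k (of_int m * mu) (Psi 0) z
      = exp (- (4 * of_real pi * \<i> * of_nat k * of_int m ^ 2 / of_nat D)) * Psi (2 * int k * m) z"
    by (simp only: m_int m_complex)
qed

text \<open>The knot state Z = C * (sum of all xi l) lies in H_k and is invariant under L,
  since L permutes the periodic family xi cyclically.\<close>
lemma cyclic_sum_invariant:
  assumes k: "0 < k"
    and xi_onb: "is_onb (Hspace k lam mu) lam mu (2 * k) xi"
    and xi_L: "\<And>l. Tstar k (- lam / of_nat (2 * k)) (xi l) = xi (l - 1)"
    and Z: "Z = (\<lambda>z. C * (\<Sum>l\<in>{0..<int (2 * k)}. xi l z))"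
  shows "Z \<in> Hspace k lam mu" and "Tstar k (- lam / of_nat (2 * k)) Z = Z"
proof -
  have xi_per: "xi (l + int (2 * k)) = xi l" for l
    using xi_onb by (simp add: is_onb_def)
  have Z_sum: "Z = (\<lambda>z. \<Sum>l\<in>{0..<int (2 * k)}. C * xi l z)"
    by (simp add: Z sum_distrib_left)
  show "Z \<in> Hspace k lam mu"
    unfolding Z_sum by (rule Hspace_lincomb) (use xi_onb in \<open>auto simp: is_onb_def\<close>)
  have "Tstar k (- lam / of_nat (2 * k)) Z = (\<lambda>z. C * (\<Sum>l\<in>{0..<int (2 * k)}. xi (l + -1) z))"
    unfolding Z by (simp only: Tstar_cmult Tstar_sum xi_L diff_conv_add_uminus)
  also have "\<dots> = Z"
  proof
    fix z
    show "C * (\<Sum>l\<in>{0..<int (2 * k)}. xi (l + -1) z) = Z z"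
      using periodic_shift_sum[of "int (2 * k)" "\<lambda>l. xi l z" "-1"] k xi_per by (simp add: Z)
  qed
  finally show "Tstar k (- lam / of_nat (2 * k)) Z = Z" .
qed

lemma knot_state_orbit_form:
  fixes xi Psi :: "int \<Rightarrow> complex \<Rightarrow> complex" and Z :: "complex \<Rightarrow> complex"
  assumes k: "0 < k" and D: "0 < D"
    and basis: "omega mu lam = 4 * pi"
    and xi_onb: "is_onb (Hspace k lam mu) lam mu (2 * k) xi"
    and xi_L: "\<And>l. Tstar k (- lam / of_nat (2 * k)) (xi l) = xi (l - 1)"
    and Z: "Z = (\<lambda>z. C * (\<Sum>l\<in>{0..<int (2 * k)}. xi l z))"
    and Psi_onb: "is_onb (Hspace k (of_nat D * mu) lam) (of_nat D * mu) lam (2 * k * D) Psi"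
    and Psi_S: "\<And>n. Tstar k (- lam / of_nat (2 * k * D)) (Psi n)
                 = (\<lambda>z. exp (\<i> * of_real pi * of_int n / of_nat (k * D)) * Psi n z)"
    and Psi_R: "\<And>n. Tstar k ((of_nat D * mu - 2 * lam) / of_nat (2 * k * D)) (Psi n) = Psi (n + 1)"
  shows "\<exists>B. Z = (\<lambda>z. B * orbit_sum k D mu (Psi 0) z)"
proof -
  note ZH = cyclic_sum_invariant(1)[OF k xi_onb xi_L Z]
  have "of_nat D * (- lam / of_nat (2 * k * D)) = - lam / of_nat (2 * k)"
    using D by (simp add: field_simps)
  then have ZL: "Tstar k (of_nat D * (- lam / of_nat (2 * k * D))) Z = Z"
    using cyclic_sum_invariant(2)[OF k xi_onb xi_L Z] by (simp only:)
  obtain c where Z_modes: "Z = (\<lambda>z. \<Sum>m\<in>{0..<int D}. c m * Psi (2 * int k * m) z)"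
    using onb_invariant_modes[OF k D refl Psi_onb Psi_S Hspace_sublattice[OF ZH] ZL] by blast
  define beta where "beta m = c m * exp (4 * of_real pi * \<i> * of_nat k * of_int m ^ 2 / of_nat D)" for m
  have Psi_Phi: "Psi (2 * int k * m) z
      = exp (4 * of_real pi * \<i> * of_nat k * of_int m ^ 2 / of_nat D) * Tstar k (of_int m * mu) (Psi 0) z"
    if "m \<in> {0..<int D}" for m z
  proof -
    define m' where "m' = nat m"
    have m': "m = int m'" using that by (simp add: m'_def)
    define a where "a = 4 * of_real pi * \<i> * of_nat k * of_int m ^ 2 / (of_nat D :: complex)"
    have "Tstar k (of_int m * mu) (Psi 0) = (\<lambda>z. exp (- a) * Psi (2 * int k * m) z)"
      using Tstar_mu_Psi0[OF k D basis Psi_S Psi_R, of m'] by (simp only: a_def m' of_int_of_nat_eq)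
    then have "exp a * Tstar k (of_int m * mu) (Psi 0) z = Psi (2 * int k * m) z"
      by (simp add: exp_minus)
    then show ?thesis
      by (simp only: a_def)
  qed
  have "Z = (\<lambda>z. \<Sum>m\<in>{0..<int D}. beta m * Tstar k (of_int m * mu) (Psi 0) z)"
  proof
    fix z
    show "Z z = (\<Sum>m\<in>{0..<int D}. beta m * Tstar k (of_int m * mu) (Psi 0) z)"
      unfolding Z_modes by (rule sum.cong[OF refl]) (simp add: Psi_Phi beta_def)
  qed
  moreover have "Tstar k (of_nat D * mu) (Psi 0) = Psi 0"
    using Hspace_lattice_inv[of "Psi 0" k "of_nat D * mu" lam 1 0] Psi_onb by (simp add: is_onb_def)
  moreover have "Tstar k (of_int j * mu) Z = Z" for j
    using Hspace_lattice_inv[OF ZH, of 0 j] by simp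
  ultimately have "Z = (\<lambda>z. (\<Sum>m\<in>{0..<int D}. beta m) / of_nat D * orbit_sum k D mu (Psi 0) z)"
    by (rule invariant_orbit_combination[OF D])
  then show ?thesis by blast
qed

lemma knot_state_expansion:
  fixes xi Psi :: "nat \<Rightarrow> int \<Rightarrow> complex \<Rightarrow> complex" and Z0 :: "nat \<Rightarrow> complex \<Rightarrow> complex"
  assumes D: "0 < D"
    and basis: "omega mu lam = 4 * pi"
    and xi_onb: "\<And>k. 0 < k \<Longrightarrow> is_onb (Hspace k lam mu) lam mu (2 * k) (xi k)"
    and xi_L: "\<And>k l. 0 < k \<Longrightarrow> Tstar k (- lam / of_nat (2 * k)) (xi k l) = xi k (l - 1)"
    and Z0_def: "\<And>k. Z0 k = (\<lambda>z. C k * (\<Sum>l\<in>{0..<int (2 * k)}. xi k l z))"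
    and Psi_onb: "\<And>k. 0 < k \<Longrightarrow> is_onb (Hspace k (of_nat D * mu) lam) (of_nat D * mu) lam (2 * k * D) (Psi k)"
    and Psi_S: "\<And>k n. 0 < k \<Longrightarrow> Tstar k (- lam / of_nat (2 * k * D)) (Psi k n)
                 = (\<lambda>z. exp (\<i> * of_real pi * of_int n / of_nat (k * D)) * Psi k n z)"
    and Psi_R: "\<And>k n. 0 < k \<Longrightarrow> Tstar k ((of_nat D * mu - 2 * lam) / of_nat (2 * k * D)) (Psi k n)
                 = Psi k (n + 1)"
  shows "\<exists>B. \<forall>k>0. Z0 k = (\<lambda>z. B k * orbit_sum k D mu (Psi k 0) z)"
proof -
  have "\<exists>B. 0 < k \<longrightarrow> Z0 k = (\<lambda>z. B * orbit_sum k D mu (Psi k 0) z)" for k :: nat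
  proof (cases "0 < k")
    case True
    then show ?thesis
      using knot_state_orbit_form[OF True D basis xi_onb[OF True] xi_L[OF True] Z0_def
          Psi_onb[OF True] Psi_S[OF True] Psi_R[OF True]] by blast
  qed simp
  then show ?thesis by metis
qed

section \<open>A theta series in H_{D,k}\<close>

lemma Tstar_gaussian_factor:
  "Tstar k x (\<lambda>y. exp (complex_of_real (- real k * (cmod y)^2 / 4)) * g y)
   = (\<lambda>y. exp (complex_of_real (- real k * (cmod y)^2 / 4)) *
          (exp (- of_nat k * x * cnj x / 4 - of_nat k * cnj x * y / 2) * g (x + y)))"
proof
  fix y
  have e: "- \<i> * complex_of_real (real k / 2 * omega x y) + complex_of_real (- real k * (cmod (x + y))^2 / 4)
      = complex_of_real (- real k * (cmod y)^2 / 4) + (- of_nat k * x * cnj x / 4 - of_nat k * cnj x * y / 2)"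
  proof -
    have a0: "complex_of_real (- real k * (cmod (x + y))^2 / 4) = - of_nat k * complex_of_real ((cmod (x+y))^2) / 4"
      by simp
    have a: "complex_of_real (- real k * (cmod (x + y))^2 / 4) = - of_nat k * ((x+y) * cnj (x+y)) / 4"
      unfolding a0 complex_norm_square ..
    have b0: "complex_of_real (- real k * (cmod y)^2 / 4) = - of_nat k * complex_of_real ((cmod y)^2) / 4"
      by simp
    have b: "complex_of_real (- real k * (cmod y)^2 / 4) = - of_nat k * (y * cnj y) / 4"
      unfolding b0 complex_norm_square ..
    have c: "- \<i> * complex_of_real (real k / 2 * omega x y) = - of_nat k * (cnj x * y - x * cnj y) / 4"
      by (simp add: omega_def complex_eq_iff algebra_simps)
    show ?thesis unfolding a b c
      by (simp add: field_simps)
  qed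
  show "Tstar k x (\<lambda>y. exp (complex_of_real (- real k * (cmod y)^2 / 4)) * g y) y =
     exp (complex_of_real (- real k * (cmod y)^2 / 4)) *
          (exp (- of_nat k * x * cnj x / 4 - of_nat k * cnj x * y / 2) * g (x + y))"
    unfolding Tstar_def by (rule exp_mult_shuffle[OF e])
qed

text \<open>A Gaussian section of L^k which depends on y only through omega(lam, y); it is
  invariant under the translations by real multiples of lam.\<close>
definition gauss :: "nat \<Rightarrow> complex \<Rightarrow> complex \<Rightarrow> complex" where
  "gauss k lam z = exp (complex_of_real (- real k * (cmod z)^2 / 4)) * exp (of_nat k * cnj lam / (4 * lam) * z^2)"

definition theta_term :: "nat \<Rightarrow> complex \<Rightarrow> complex \<Rightarrow> int \<Rightarrow> complex \<Rightarrow> complex" where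
  "theta_term k lam nu n = Tstar k (of_int n * nu) (gauss k lam)"

lemma gauss_lam_inv:
  assumes lam: "lam \<noteq> 0"
  shows "Tstar k (of_real t * lam) (gauss k lam) = gauss k lam"
proof -
  have "Tstar k (of_real t * lam) (gauss k lam) = (\<lambda>y. exp (complex_of_real (- real k * (cmod y)^2 / 4)) *
          (exp (- of_nat k * (of_real t * lam) * cnj (of_real t * lam) / 4 - of_nat k * cnj (of_real t * lam) * y / 2) *
           exp (of_nat k * cnj lam / (4 * lam) * (of_real t * lam + y)^2)))"
    unfolding gauss_def[abs_def] by (rule Tstar_gaussian_factor)
  also have "\<dots> = gauss k lam"
  proof
    fix y
    have "(- of_nat k * (of_real t * lam) * cnj (of_real t * lam) / 4 - of_nat k * cnj (of_real t * lam) * y / 2) +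
           (of_nat k * cnj lam / (4 * lam) * (of_real t * lam + y)^2) = of_nat k * cnj lam / (4 * lam) * y^2"
      using lam by (simp add: field_simps power2_eq_square)
    then have "exp (- of_nat k * (of_real t * lam) * cnj (of_real t * lam) / 4 - of_nat k * cnj (of_real t * lam) * y / 2) *
           exp (of_nat k * cnj lam / (4 * lam) * (of_real t * lam + y)^2) = exp (of_nat k * cnj lam / (4 * lam) * y^2)"
      by (metis exp_add)
    then show "exp (complex_of_real (- real k * (cmod y)^2 / 4)) *
          (exp (- of_nat k * (of_real t * lam) * cnj (of_real t * lam) / 4 - of_nat k * cnj (of_real t * lam) * y / 2) *
           exp (of_nat k * cnj lam / (4 * lam) * (of_real t * lam + y)^2)) = gauss k lam y"
      by (simp add: gauss_def)
  qed
  finally show ?thesis .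
qed

lemma norm_gauss:
  assumes lam: "lam \<noteq> 0"
  shows "cmod (gauss k lam z) = exp (- (real k / 2) * (omega lam z)^2 / (cmod lam)^2)"
proof -
  define u where "u = cnj lam * z"
  have l2: "(cmod lam)^2 > 0" using lam by simp
  have cl: "complex_of_real (cmod lam) * complex_of_real (cmod lam) = lam * cnj lam"
    by (metis complex_norm_square of_real_mult power2_eq_square)
  have h1: "cnj lam / (4 * lam) * z^2 = u^2 / complex_of_real (4 * (cmod lam)^2)"
    using lam by (simp add: u_def field_simps power2_eq_square cl)
  have h2: "Re (u^2 / complex_of_real (4 * (cmod lam)^2)) = ((Re u)^2 - (Im u)^2) / (4 * (cmod lam)^2)"
    by (simp add: Re_divide_of_real power2_eq_square)
  have h3: "(cmod z)^2 = ((Re u)^2 + (Im u)^2) / (cmod lam)^2"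
  proof -
    have e1: "(cmod u)^2 = (cmod lam)^2 * (cmod z)^2" by (simp add: u_def norm_mult power_mult_distrib)
    have e2: "(cmod u)^2 = (Re u)^2 + (Im u)^2" by (simp only: cmod_power2)
    have "(cmod z)^2 = (cmod u)^2 / (cmod lam)^2" using e1 l2 by (simp add: field_simps)
    then show ?thesis by (simp only: e2)
  qed
  have om: "omega lam z = Im u" by (simp add: omega_def u_def)
  have "cmod (gauss k lam z) = exp (- real k * (cmod z)^2 / 4) * exp (Re (of_nat k * cnj lam / (4 * lam) * z^2))"
    by (simp add: gauss_def norm_mult norm_exp)
  also have "Re (of_nat k * cnj lam / (4 * lam) * z^2) = real k * (((Re u)^2 - (Im u)^2) / (4 * (cmod lam)^2))"
  proof -
    have "of_nat k * cnj lam / (4 * lam) * z^2 = of_real (real k) * (cnj lam / (4 * lam) * z^2)" by simp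
    moreover have "Re (of_real (real k) * w) = real k * Re w" for w by simp
    ultimately show ?thesis by (simp only: h1 h2)
  qed
  also have "exp (- real k * (cmod z)^2 / 4) * exp (real k * (((Re u)^2 - (Im u)^2) / (4 * (cmod lam)^2)))
      = exp (- (real k / 2) * (omega lam z)^2 / (cmod lam)^2)"
  proof -
    have "- real k * (cmod z)^2 / 4 + real k * (((Re u)^2 - (Im u)^2) / (4 * (cmod lam)^2)) = - (real k / 2) * (omega lam z)^2 / (cmod lam)^2"
      unfolding h3 om using l2 by (simp add: field_simps)
    then show ?thesis by (metis exp_add)
  qed
  finally show ?thesis .
qed

lemma norm_theta_term:
  assumes lam: "lam \<noteq> 0"
  shows "cmod (theta_term k lam nu n z) = exp (- (real k / 2) * (of_int n * omega lam nu + omega lam z)^2 / (cmod lam)^2)"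
proof -
  have "omega lam (of_int n * nu + z) = of_int n * omega lam nu + omega lam z"
    by (simp add: omega_def algebra_simps)
  then show ?thesis by (simp add: theta_term_def norm_Tstar norm_gauss[OF lam])
qed

lemma geometric_has_sum:
  fixes r :: real assumes "0 \<le> r" "r < 1"
  shows "((\<lambda>n::nat. r ^ n) has_sum (1 / (1 - r))) UNIV"
  using assms by (intro sums_nonneg_imp_has_sum geometric_sums) auto

lemma geom_pos:
  fixes r :: real assumes "0 \<le> r" "r < 1"
  shows "((\<lambda>n::int. r ^ nat \<bar>n\<bar>) has_sum (r / (1 - r))) {n. n > 0}"
proof -
  have bij: "bij_betw (\<lambda>m::nat. int m + 1) UNIV {n. n > 0}"
    by (rule bij_betwI[where g = "\<lambda>n. nat (n - 1)"]) auto
  have "((\<lambda>m::nat. r * r ^ m) has_sum (r * (1 / (1 - r)))) UNIV"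
    by (rule has_sum_cmult_right[OF geometric_has_sum[OF assms]])
  moreover have "r * r ^ m = r ^ nat \<bar>int m + 1\<bar>" for m :: nat
    by (simp add: nat_add_distrib)
  ultimately have "((\<lambda>m::nat. r ^ nat \<bar>int m + 1\<bar>) has_sum (r / (1 - r))) UNIV" by simp
  then show ?thesis using has_sum_reindex_bij_betw[OF bij, of "\<lambda>n. r ^ nat \<bar>n\<bar>"] by simp
qed

lemma geom_neg:
  fixes r :: real assumes "0 \<le> r" "r < 1"
  shows "((\<lambda>n::int. r ^ nat \<bar>n\<bar>) has_sum (r / (1 - r))) {n. n < 0}"
proof -
  have bij: "bij_betw (\<lambda>m::nat. - int m - 1) UNIV {n. n < 0}"
    by (rule bij_betwI[where g = "\<lambda>n. nat (- n - 1)"]) auto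
  have "((\<lambda>m::nat. r * r ^ m) has_sum (r * (1 / (1 - r)))) UNIV"
    by (rule has_sum_cmult_right[OF geometric_has_sum[OF assms]])
  moreover have "r * r ^ m = r ^ nat \<bar>- int m - 1\<bar>" for m :: nat
    by (simp add: nat_add_distrib)
  ultimately have "((\<lambda>m::nat. r ^ nat \<bar>- int m - 1\<bar>) has_sum (r / (1 - r))) UNIV" by simp
  then show ?thesis using has_sum_reindex_bij_betw[OF bij, of "\<lambda>n. r ^ nat \<bar>n\<bar>"] by simp
qed

lemma geom_nz:
  fixes r :: real assumes "0 \<le> r" "r < 1"
  shows "((\<lambda>n::int. r ^ nat \<bar>n\<bar>) has_sum (2 * r / (1 - r))) (UNIV - {0})"
proof -
  have "((\<lambda>n::int. r ^ nat \<bar>n\<bar>) has_sum (r / (1 - r) + r / (1 - r))) ({n. n > 0} \<union> {n. n < 0})"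
    by (rule has_sum_Un_disjoint[OF geom_pos[OF assms] geom_neg[OF assms]]) auto
  moreover have "{n::int. n > 0} \<union> {n. n < 0} = UNIV - {0}" by auto
  ultimately show ?thesis by simp
qed

lemma geom_all:
  fixes r :: real assumes "0 \<le> r" "r < 1"
  shows "((\<lambda>n::int. r ^ nat \<bar>n\<bar>) has_sum (1 + 2 * r / (1 - r))) UNIV"
proof -
  have "((\<lambda>n::int. r ^ nat \<bar>n\<bar>) has_sum (r ^ nat \<bar>0\<bar> + 2 * r / (1 - r))) (insert 0 (UNIV - {0}))"
    by (rule has_sum_insert[OF _ geom_nz[OF assms]]) auto
  then show ?thesis by (simp add: insert_Diff_if)
qed

text \<open>The majorant used at the points j mu, where even the term n = 0 is small.\<close>
lemma geom_all_max:
  fixes r :: real assumes "0 \<le> r" "r < 1"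
  shows "((\<lambda>n::int. r ^ max 1 (nat \<bar>n\<bar>)) has_sum (r + 2 * r / (1 - r))) UNIV"
proof -
  have "((\<lambda>n::int. r ^ max 1 (nat \<bar>n\<bar>)) has_sum (2 * r / (1 - r))) (UNIV - {0})"
  proof -
    have "((\<lambda>n::int. r ^ nat \<bar>n\<bar>) has_sum (2 * r / (1 - r))) (UNIV - {0})" by (rule geom_nz[OF assms])
    then show ?thesis by (rule has_sum_cong[THEN iffD1, rotated]) (auto simp: max_def)
  qed
  then have "((\<lambda>n::int. r ^ max 1 (nat \<bar>n\<bar>)) has_sum (r ^ max 1 (nat \<bar>0\<bar>) + 2 * r / (1 - r))) (insert 0 (UNIV - {0}))"
    by (rule has_sum_insert[rotated]) auto
  then show ?thesis by (simp add: insert_Diff_if)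
qed

lemma sq_ge_abs_int: "real_of_int \<bar>n\<bar> \<le> (real_of_int n)^2" for n :: int
proof -
  have "\<bar>n\<bar> \<le> n^2"
  proof (cases "n = 0")
    case False
    then have "\<bar>n\<bar> * 1 \<le> \<bar>n\<bar> * \<bar>n\<bar>" by (intro mult_left_mono) auto
    then show ?thesis by (simp add: power2_eq_square abs_mult_self_eq)
  qed simp
  then show ?thesis by (metis of_int_le_iff of_int_power)
qed

lemma theta_term_bound:
  fixes lam nu z :: complex and k :: nat and n :: int
  assumes lam: "lam \<noteq> 0" and k: "0 < k"
  defines "L \<equiv> (cmod lam)^2" and "A \<equiv> omega lam nu" and "w \<equiv> omega lam z"
  shows "cmod (theta_term k lam nu n z) \<le> exp (real k * w^2 / (2 * L)) * exp (- real k * A^2 / (4 * L)) ^ nat \<bar>n\<bar>"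
proof -
  have L: "L > 0" using lam by (simp add: L_def)
  have q: "(of_int n * A + w)^2 \<ge> real_of_int \<bar>n\<bar> * A^2 / 2 - w^2"
  proof -
    have "(of_int n * A + w)^2 \<ge> (of_int n * A)^2 / 2 - w^2"
      using sum_squares_ge_zero[of "of_int n * A / sqrt 2 + w * sqrt 2" 0]
      by (simp add: power2_eq_square algebra_simps)
    moreover have "(of_int n * A)^2 / 2 \<ge> real_of_int \<bar>n\<bar> * A^2 / 2"
      using sq_ge_abs_int[of n] by (simp add: power_mult_distrib mult_right_mono)
    ultimately show ?thesis by linarith
  qed
  have "cmod (theta_term k lam nu n z) = exp (- (real k / 2) * (of_int n * A + w)^2 / L)"
    by (simp add: norm_theta_term[OF lam] L_def A_def w_def)
  also have "\<dots> \<le> exp (real k * w^2 / (2 * L) + real_of_int \<bar>n\<bar> * (- real k * A^2 / (4 * L)))"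
  proof (rule exp_le_cancel_iff[THEN iffD2] )
    have "real k * (real_of_int \<bar>n\<bar> * A^2 / 2 - w^2) \<le> real k * (of_int n * A + w)^2"
      using q k by (intro mult_left_mono) auto
    then show "- (real k / 2) * (of_int n * A + w)^2 / L \<le> real k * w^2 / (2 * L) + real_of_int \<bar>n\<bar> * (- real k * A^2 / (4 * L))"
      using L by (simp add: field_simps)
  qed
  also have "\<dots> = exp (real k * w^2 / (2 * L)) * exp (- real k * A^2 / (4 * L)) ^ nat \<bar>n\<bar>"
  proof -
    have m: "real_of_int \<bar>n\<bar> = of_nat (nat \<bar>n\<bar>)" by simp
    show ?thesis by (simp only: m exp_add exp_of_nat_mult)
  qed
  finally show ?thesis .
qed

lemma theta_term_summable:
  assumes lam: "lam \<noteq> 0" and k: "0 < k" and A: "omega lam nu \<noteq> 0"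
  shows "(\<lambda>n. theta_term k lam nu n z) summable_on UNIV"
proof -
  define L where "L = (cmod lam)^2"
  define C where "C = exp (real k * (omega lam z)^2 / (2 * L))"
  define r where "r = exp (- real k * (omega lam nu)^2 / (4 * L))"
  have L: "L > 0" using lam by (simp add: L_def)
  have r0: "0 \<le> r" by (simp add: r_def)
  have r1: "r < 1" using L k A by (simp add: r_def)
  have "((\<lambda>n::int. C * r ^ nat \<bar>n\<bar>) has_sum (C * (1 + 2 * r / (1 - r)))) UNIV"
    by (rule has_sum_cmult_right[OF geom_all[OF r0 r1]])
  then have "(\<lambda>n::int. C * r ^ nat \<bar>n\<bar>) summable_on UNIV" by (rule has_sum_imp_summable)
  then have "(\<lambda>n. cmod (theta_term k lam nu n z)) summable_on UNIV"
    by (rule summable_on_comparison_test) (use theta_term_bound[OF lam k] in \<open>auto simp: C_def r_def L_def\<close>)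
  then show ?thesis by (rule abs_summable_summable)
qed

definition theta :: "nat \<Rightarrow> complex \<Rightarrow> complex \<Rightarrow> complex \<Rightarrow> complex" where
  "theta k lam nu z = (\<Sum>\<^sub>\<infinity>n. theta_term k lam nu n z)"

lemma theta_has_sum:
  assumes lam: "lam \<noteq> 0" and k: "0 < k" and A: "omega lam nu \<noteq> 0"
  shows "((\<lambda>n. theta_term k lam nu n z) has_sum theta k lam nu z) UNIV"
  unfolding theta_def using theta_term_summable[OF lam k A] by (simp add: summable_iff_has_sum_infsum)

lemma theta_term_shift: "Tstar k (of_int a * nu) (theta_term k lam nu n) = theta_term k lam nu (n + a)"
proof -
  have "Tstar k (of_int a * nu) (theta_term k lam nu n) = Tstar k (of_int a * nu + of_int n * nu) (gauss k lam)"
    unfolding theta_term_def by (rule Tstar_comp0) (rule omega_int_mult)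
  then show ?thesis by (simp add: theta_term_def algebra_simps)
qed

lemma theta_nu_inv: "Tstar k (of_int a * nu) (theta k lam nu) = theta k lam nu"
proof -
  have "Tstar k (of_int a * nu) (theta k lam nu) = (\<lambda>z. \<Sum>\<^sub>\<infinity>n. theta_term k lam nu (n + a) z)"
    unfolding theta_def[abs_def] by (simp only: Tstar_infsum theta_term_shift)
  also have "\<dots> = theta k lam nu"
  proof
    fix z
    have "bij_betw (\<lambda>n::int. n + a) UNIV UNIV"
      by (rule bij_betwI[where g = "\<lambda>n. n - a"]) auto
    then show "(\<Sum>\<^sub>\<infinity>n. theta_term k lam nu (n + a) z) = theta k lam nu z"
      unfolding theta_def by (rule infsum_reindex_bij_betw[where f = "\<lambda>n. theta_term k lam nu n z"])
  qed
  finally show ?thesis .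
qed

lemma theta_term_lam_inv:
  assumes lam: "lam \<noteq> 0" and k: "0 < k" and D: "0 < D"
    and A: "omega lam nu = - 4 * pi * real D"
  shows "Tstar k (of_real (of_int j / real (2 * k * D)) * lam) (theta_term k lam nu n) = theta_term k lam nu n"
proof -
  define x where "x = of_real (of_int j / real (2 * k * D)) * lam"
  define y where "y = of_int n * nu"
  have oxy: "omega x y = - 2 * pi * of_int j * of_int n / real k"
  proof -
    have "omega x y = (of_int j / real (2 * k * D)) * (of_int n * omega lam nu)"
      unfolding x_def y_def by (simp only: omega_scale_left omega_int_right) (simp add: mult_ac)
    then show ?thesis using k D by (simp only: A) (simp add: field_simps)
  qed
  have e: "exp (- \<i> * complex_of_real (real k / 2 * omega y x)) = exp (- \<i> * complex_of_real (real k / 2 * omega x y))"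
  proof -
    have "- \<i> * complex_of_real (real k / 2 * omega y x) = - \<i> * complex_of_real (real k / 2 * omega x y) + complex_of_real (real_of_int (2 * (- j * n)) * pi) * \<i>"
      using k by (simp only: omega_swap[of y x] oxy) (simp add: field_simps)
    then show ?thesis unfolding exp_eq by blast
  qed
  have "Tstar k x (theta_term k lam nu n) = (\<lambda>z. exp (- \<i> * complex_of_real (real k / 2 * omega y x)) * Tstar k (x + y) (gauss k lam) z)"
    unfolding theta_term_def y_def[symmetric] by (rule Tstar_comp)
  also have "\<dots> = (\<lambda>z. exp (- \<i> * complex_of_real (real k / 2 * omega x y)) * Tstar k (y + x) (gauss k lam) z)"
    by (simp only: e add.commute)
  also have "\<dots> = Tstar k y (Tstar k x (gauss k lam))"
    by (rule Tstar_comp[symmetric])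
  also have "\<dots> = theta_term k lam nu n"
    by (simp only: x_def gauss_lam_inv[OF lam]) (simp add: theta_term_def y_def)
  finally show ?thesis by (simp add: x_def)
qed

lemma theta_lam_inv:
  assumes lam: "lam \<noteq> 0" and k: "0 < k" and D: "0 < D"
    and A: "omega lam nu = - 4 * pi * real D"
  shows "Tstar k (of_real (of_int j / real (2 * k * D)) * lam) (theta k lam nu) = theta k lam nu"
  unfolding theta_def[abs_def] by (simp only: Tstar_infsum theta_term_lam_inv[OF assms])

lemma theta_lattice_inv:
  assumes lam: "lam \<noteq> 0" and k: "0 < k" and D: "0 < D"
    and A: "omega lam nu = - 4 * pi * real D"
    and x: "x \<in> lattice nu lam"
  shows "Tstar k x (theta k lam nu) = theta k lam nu"
proof -
  obtain m n where xmn: "x = of_int m * nu + of_int n * lam" using x by (auto simp: lattice_def)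
  have nl: "of_int n * lam = of_real (of_int (2 * int k * int D * n) / real (2 * k * D)) * lam"
    using k D by (simp add: field_simps)
  have inv_n: "Tstar k (of_int n * lam) (theta k lam nu) = theta k lam nu"
    unfolding nl by (rule theta_lam_inv[OF assms(1-4)])
  have om: "omega (of_int n * lam) (of_int m * nu) = - 4 * pi * real D * of_int n * of_int m"
  proof -
    have "omega (of_int n * lam) (of_int m * nu) = of_int n * (of_int m * omega lam nu)"
      by (simp only: omega_int_left omega_int_right) (simp add: mult_ac)
    then show ?thesis by (simp only: A) (simp add: field_simps)
  qed
  have e: "exp (- \<i> * complex_of_real (real k / 2 * omega (of_int n * lam) (of_int m * nu))) = 1"
  proof -
    have "- \<i> * complex_of_real (real k / 2 * omega (of_int n * lam) (of_int m * nu)) = 0 + complex_of_real (real_of_int (2 * (int k * int D * n * m)) * pi) * \<i>"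
      by (simp only: om) (simp add: field_simps)
    then have "exp (- \<i> * complex_of_real (real k / 2 * omega (of_int n * lam) (of_int m * nu))) = exp 0"
      unfolding exp_eq by blast
    then show ?thesis by simp
  qed
  have "Tstar k (of_int m * nu) (Tstar k (of_int n * lam) (theta k lam nu)) =
        (\<lambda>z. exp (- \<i> * complex_of_real (real k / 2 * omega (of_int n * lam) (of_int m * nu))) * Tstar k x (theta k lam nu) z)"
    unfolding xmn by (rule Tstar_comp)
  then have "Tstar k (of_int m * nu) (Tstar k (of_int n * lam) (theta k lam nu)) = Tstar k x (theta k lam nu)"
    by (simp only: e mult_1_left)
  then have "Tstar k x (theta k lam nu) = Tstar k (of_int m * nu) (Tstar k (of_int n * lam) (theta k lam nu))"
    by simp
  also have "\<dots> = theta k lam nu" by (simp add: inv_n theta_nu_inv)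
  finally show ?thesis .
qed

text \<open>After removing the Gaussian weight, the theta series becomes a sum of two
  series of the form Sum_m A^(m^2) y^m with |A| < 1, i.e. entire functions of y.\<close>
lemma theta_half_norm_summable:
  fixes A y :: complex
  assumes A: "cmod A < 1"
  shows "summable (\<lambda>m. cmod (A ^ (m^2) * y ^ m))"
proof -
  have "(\<lambda>m. cmod A ^ m * cmod y) \<longlonglongrightarrow> 0 * cmod y"
    by (intro tendsto_mult tendsto_const LIMSEQ_power_zero) (use A in auto)
  then have "eventually (\<lambda>m. cmod A ^ m * cmod y < 1/2) sequentially"
    by (intro order_tendstoD(2)) auto
  then have ev: "eventually (\<lambda>m. norm (cmod (A ^ (m^2) * y ^ m)) \<le> (1/2) ^ m) sequentially"
  proof (rule eventually_mono)
    fix m assume h: "cmod A ^ m * cmod y < 1/2"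
    have "norm (cmod (A ^ (m^2) * y ^ m)) = (cmod A ^ m * cmod y) ^ m"
      by (simp add: norm_mult norm_power power_mult_distrib power2_eq_square power_mult)
    also have "\<dots> \<le> (1/2) ^ m"
      using h by (intro power_mono) auto
    finally show "norm (cmod (A ^ (m^2) * y ^ m)) \<le> (1/2) ^ m" .
  qed
  show ?thesis
    by (rule summable_comparison_test_ev[OF ev]) (simp add: summable_geometric)
qed

definition theta_half :: "complex \<Rightarrow> complex \<Rightarrow> complex" where
  "theta_half A y = (\<Sum>m. A ^ (m^2) * y ^ m)"

lemma theta_half_holomorphic:
  assumes A: "cmod A < 1"
  shows "theta_half A holomorphic_on UNIV"
proof -
  have "\<And>y. summable (\<lambda>m. A ^ (m^2) * y ^ m)"
    using theta_half_norm_summable[OF A] by (rule summable_norm_cancel)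
  then have "\<And>x. ((\<lambda>x. \<Sum>m. A ^ (m^2) * x ^ m) has_field_derivative (\<Sum>m. diffs (\<lambda>m. A ^ (m^2)) m * x ^ m)) (at x)"
    by (rule termdiffs_strong_converges_everywhere)
  then show ?thesis
    unfolding holomorphic_on_def field_differentiable_def theta_half_def[abs_def]
    using has_field_derivative_at_within by blast
qed

lemma theta_half_exp_holomorphic:
  assumes "cmod A < 1"
  shows "(\<lambda>z. theta_half A (exp (c * z))) holomorphic_on UNIV"
proof -
  have "(theta_half A \<circ> (\<lambda>z. exp (c * z))) holomorphic_on UNIV"
    using theta_half_holomorphic[OF assms]
    by (intro holomorphic_on_compose) (auto intro!: holomorphic_intros intro: holomorphic_on_subset)
  then show ?thesis by (simp add: o_def)
qed

lemma theta_half_has_sum: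
  assumes A: "cmod A < 1"
  shows "((\<lambda>m::nat. A ^ (m^2) * y ^ m) has_sum theta_half A y) UNIV"
proof -
  have s: "summable (\<lambda>m. A ^ (m^2) * y ^ m)"
    using theta_half_norm_summable[OF A] by (rule summable_norm_cancel)
  show ?thesis
    by (rule norm_summable_imp_has_sum[OF theta_half_norm_summable[OF A]]) (simp add: theta_half_def summable_sums[OF s])
qed

lemma theta_half_has_sum_Suc:
  assumes A: "cmod A < 1"
  shows "((\<lambda>m::nat. A ^ ((Suc m)^2) * y ^ (Suc m)) has_sum (theta_half A y - 1)) UNIV"
proof -
  have s: "summable (\<lambda>m. A ^ (m^2) * y ^ m)"
    using theta_half_norm_summable[OF A] by (rule summable_norm_cancel)
  have ns: "summable (\<lambda>m. cmod (A ^ ((Suc m)^2) * y ^ (Suc m)))"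
    using theta_half_norm_summable[OF A, of y] by (subst summable_Suc_iff[where f = "\<lambda>m. cmod (A ^ (m^2) * y ^ m)"])
  have "(\<lambda>m. A ^ ((Suc m)^2) * y ^ (Suc m)) sums (theta_half A y - 1)"
    using summable_sums[OF s] by (subst sums_Suc_iff) (simp add: theta_half_def)
  then show ?thesis by (rule norm_summable_imp_has_sum[OF ns])
qed

definition theta_entire_term :: "nat \<Rightarrow> complex \<Rightarrow> complex \<Rightarrow> int \<Rightarrow> complex \<Rightarrow> complex" where
  "theta_entire_term k lam nu n z = exp (- of_nat k * (of_int n * nu) * cnj (of_int n * nu) / 4 - of_nat k * cnj (of_int n * nu) * z / 2) *
      exp (of_nat k * cnj lam / (4 * lam) * (of_int n * nu + z)^2)"

lemma theta_term_factor: "theta_term k lam nu n z = exp (complex_of_real (- real k * (cmod z)^2 / 4)) * theta_entire_term k lam nu n z"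
  unfolding theta_term_def theta_entire_term_def gauss_def[abs_def] Tstar_gaussian_factor by simp

lemma theta_entire_term_nonneg:
  fixes k :: nat and lam nu z :: complex and m :: nat
  defines "bb \<equiv> of_nat k * cnj lam / (4 * lam)"
  defines "aa \<equiv> bb * nu^2 - of_nat k * nu * cnj nu / 4"
  defines "cc \<equiv> 2 * bb * nu - of_nat k * cnj nu / 2"
  shows "theta_entire_term k lam nu (int m) z = exp (bb * z^2) * (exp aa ^ (m^2) * exp (cc * z) ^ m)"
proof -
  have "theta_entire_term k lam nu (int m) z = exp ((- of_nat k * (of_nat m * nu) * cnj (of_nat m * nu) / 4 - of_nat k * cnj (of_nat m * nu) * z / 2) +
      bb * (of_nat m * nu + z)^2)"
    by (simp add: theta_entire_term_def exp_add bb_def)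
  also have "(- of_nat k * (of_nat m * nu) * cnj (of_nat m * nu) / 4 - of_nat k * cnj (of_nat m * nu) * z / 2) +
      bb * (of_nat m * nu + z)^2 = bb * z^2 + (of_nat (m^2) * aa + of_nat m * (cc * z))"
    by (simp add: aa_def cc_def field_simps power2_eq_square)
  also have "exp \<dots> = exp (bb * z^2) * (exp aa ^ (m^2) * exp (cc * z) ^ m)"
    by (simp only: exp_add exp_of_nat_mult)
  finally show ?thesis .
qed

lemma theta_entire_term_neg:
  fixes k :: nat and lam nu z :: complex and m :: nat
  defines "bb \<equiv> of_nat k * cnj lam / (4 * lam)"
  defines "aa \<equiv> bb * nu^2 - of_nat k * nu * cnj nu / 4"
  defines "cc \<equiv> 2 * bb * nu - of_nat k * cnj nu / 2"
  shows "theta_entire_term k lam nu (- int m - 1) z = exp (bb * z^2) * (exp aa ^ ((Suc m)^2) * exp (- cc * z) ^ (Suc m))"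
proof -
  have e: "of_int (- int m - 1) = - (of_nat (Suc m) :: complex)" by simp
  have "theta_entire_term k lam nu (- int m - 1) z = exp ((- of_nat k * (- of_nat (Suc m) * nu) * cnj (- of_nat (Suc m) * nu) / 4 - of_nat k * cnj (- of_nat (Suc m) * nu) * z / 2) +
      bb * (- of_nat (Suc m) * nu + z)^2)"
    unfolding theta_entire_term_def e by (simp only: exp_add bb_def)
  also have "(- of_nat k * (- of_nat (Suc m) * nu) * cnj (- of_nat (Suc m) * nu) / 4 - of_nat k * cnj (- of_nat (Suc m) * nu) * z / 2) +
      bb * (- of_nat (Suc m) * nu + z)^2 = bb * z^2 + (of_nat ((Suc m)^2) * aa + of_nat (Suc m) * (- cc * z))"
    by (simp add: aa_def cc_def field_simps power2_eq_square)
  also have "exp \<dots> = exp (bb * z^2) * (exp aa ^ ((Suc m)^2) * exp (- cc * z) ^ (Suc m))"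
    by (simp only: exp_add exp_of_nat_mult)
  finally show ?thesis .
qed

text \<open>The coefficient A of the one-sided series is the value of the Gaussian at nu,
  so |A| < 1 as soon as omega(lam, nu) is nonzero.\<close>
lemma gauss_at_nu:
  fixes k :: nat and lam nu z :: complex and m :: nat
  defines "bb \<equiv> of_nat k * cnj lam / (4 * lam)"
  defines "aa \<equiv> bb * nu^2 - of_nat k * nu * cnj nu / 4"
  shows "exp aa = gauss k lam nu"
proof -
  have "complex_of_real (- real k * (cmod nu)^2 / 4) = - of_nat k * complex_of_real ((cmod nu)^2) / 4" by simp
  also have "\<dots> = - of_nat k * nu * cnj nu / 4" by (simp only: complex_norm_square mult.assoc)
  finally have "complex_of_real (- real k * (cmod nu)^2 / 4) = - of_nat k * nu * cnj nu / 4" .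
  then have "gauss k lam nu = exp (- of_nat k * nu * cnj nu / 4) * exp (bb * nu^2)"
    by (simp only: gauss_def bb_def)
  moreover have "aa = (- of_nat k * nu * cnj nu / 4) + bb * nu^2" by (simp add: aa_def)
  ultimately show ?thesis by (simp only: exp_add)
qed

lemma theta_entire_has_sum:
  fixes k :: nat and lam nu z :: complex
  defines "bb \<equiv> of_nat k * cnj lam / (4 * lam)"
  defines "aa \<equiv> bb * nu^2 - of_nat k * nu * cnj nu / 4"
  defines "cc \<equiv> 2 * bb * nu - of_nat k * cnj nu / 2"
  assumes A: "cmod (exp aa) < 1"
  shows "((\<lambda>n. theta_entire_term k lam nu n z) has_sum
           (exp (bb * z^2) * theta_half (exp aa) (exp (cc * z)) + exp (bb * z^2) * (theta_half (exp aa) (exp (- cc * z)) - 1))) UNIV"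
proof -
  have p: "((\<lambda>m::nat. theta_entire_term k lam nu (int m) z) has_sum exp (bb * z^2) * theta_half (exp aa) (exp (cc * z))) UNIV"
  proof -
    have "((\<lambda>m::nat. exp (bb * z^2) * (exp aa ^ (m^2) * exp (cc * z) ^ m)) has_sum exp (bb * z^2) * theta_half (exp aa) (exp (cc * z))) UNIV"
      by (rule has_sum_cmult_right[OF theta_half_has_sum[OF A]])
    then show ?thesis by (simp only: theta_entire_term_nonneg[of k lam nu, folded bb_def, folded aa_def cc_def])
  qed
  have n: "((\<lambda>m::nat. theta_entire_term k lam nu (- int m - 1) z) has_sum exp (bb * z^2) * (theta_half (exp aa) (exp (- cc * z)) - 1)) UNIV"
  proof -
    have "((\<lambda>m::nat. exp (bb * z^2) * (exp aa ^ ((Suc m)^2) * exp (- cc * z) ^ (Suc m))) has_sum exp (bb * z^2) * (theta_half (exp aa) (exp (- cc * z)) - 1)) UNIV"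
      by (rule has_sum_cmult_right[OF theta_half_has_sum_Suc[OF A]])
    then show ?thesis by (simp only: theta_entire_term_neg[of k lam nu, folded bb_def, folded aa_def cc_def])
  qed
  have b1: "bij_betw (\<lambda>m::nat. int m) UNIV {n. n \<ge> 0}"
    by (rule bij_betwI[where g = nat]) auto
  have b2: "bij_betw (\<lambda>m::nat. - int m - 1) UNIV {n. n < 0}"
    by (rule bij_betwI[where g = "\<lambda>n. nat (- n - 1)"]) auto
  have p': "((\<lambda>n. theta_entire_term k lam nu n z) has_sum exp (bb * z^2) * theta_half (exp aa) (exp (cc * z))) {n. n \<ge> 0}"
    using has_sum_reindex_bij_betw[OF b1, of "\<lambda>n. theta_entire_term k lam nu n z"] p by simp
  have n': "((\<lambda>n. theta_entire_term k lam nu n z) has_sum exp (bb * z^2) * (theta_half (exp aa) (exp (- cc * z)) - 1)) {n. n < 0}"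
    using has_sum_reindex_bij_betw[OF b2, of "\<lambda>n. theta_entire_term k lam nu n z"] n by simp
  have "((\<lambda>n. theta_entire_term k lam nu n z) has_sum (exp (bb * z^2) * theta_half (exp aa) (exp (cc * z)) + exp (bb * z^2) * (theta_half (exp aa) (exp (- cc * z)) - 1))) ({n. n \<ge> 0} \<union> {n. n < 0})"
    by (rule has_sum_Un_disjoint[OF p' n']) auto
  moreover have "{n::int. n \<ge> 0} \<union> {n. n < 0} = UNIV" by auto
  ultimately show ?thesis by simp
qed

lemma theta_hol_sec:
  assumes lam: "lam \<noteq> 0" and k: "0 < k" and A: "omega lam nu \<noteq> 0"
  shows "hol_sec k (theta k lam nu)"
proof -
  define bb where "bb = of_nat k * cnj lam / (4 * lam)"
  define aa where "aa = bb * nu^2 - of_nat k * nu * cnj nu / 4"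
  define cc where "cc = 2 * bb * nu - of_nat k * cnj nu / 2"
  have Aa: "cmod (exp aa) < 1"
  proof -
    have "exp aa = gauss k lam nu" unfolding aa_def bb_def by (rule gauss_at_nu)
    then have "cmod (exp aa) = exp (- (real k / 2) * (omega lam nu)^2 / (cmod lam)^2)"
      by (simp add: norm_gauss[OF lam])
    moreover have "- (real k / 2) * (omega lam nu)^2 / (cmod lam)^2 < 0"
      using lam k A by (simp add: divide_neg_pos)
    ultimately show ?thesis by simp
  qed
  define g where "g z = exp (bb * z^2) * theta_half (exp aa) (exp (cc * z)) + exp (bb * z^2) * (theta_half (exp aa) (exp (- cc * z)) - 1)" for z
  have hs: "((\<lambda>n. theta_entire_term k lam nu n z) has_sum g z) UNIV" for z
    unfolding g_def bb_def aa_def cc_def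
    by (rule theta_entire_has_sum) (use Aa in \<open>simp add: aa_def bb_def\<close>)
  have Geq: "theta k lam nu z = exp (complex_of_real (- real k * (cmod z)^2 / 4)) * g z" for z
  proof -
    have "theta k lam nu z = (\<Sum>\<^sub>\<infinity>n. exp (complex_of_real (- real k * (cmod z)^2 / 4)) * theta_entire_term k lam nu n z)"
      by (simp add: theta_def theta_term_factor)
    also have "\<dots> = exp (complex_of_real (- real k * (cmod z)^2 / 4)) * (\<Sum>\<^sub>\<infinity>n. theta_entire_term k lam nu n z)"
      by (rule infsum_cmult_right')
    also have "(\<Sum>\<^sub>\<infinity>n. theta_entire_term k lam nu n z) = g z"
      by (rule infsumI[OF hs])
    finally show ?thesis .
  qed
  have "g holomorphic_on UNIV"
    unfolding g_def[abs_def]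
    using theta_half_exp_holomorphic[OF Aa, of cc] theta_half_exp_holomorphic[OF Aa, of "- cc"]
    by (auto intro!: holomorphic_intros)
  then show ?thesis unfolding hol_sec_def using Geq by blast
qed

text \<open>The theta series lies in H_{D,k} and is invariant under S, so it is a multiple
  of Psi 0 (the case p = 1 of the mode selection).\<close>
lemma theta_multiple_Psi0:
  fixes Psi :: "int \<Rightarrow> complex \<Rightarrow> complex"
  assumes k: "0 < k" and D: "0 < D"
    and basis: "omega mu lam = 4 * pi"
    and Psi_onb: "is_onb (Hspace k (of_nat D * mu) lam) (of_nat D * mu) lam (2 * k * D) Psi"
    and Psi_S: "\<And>n. Tstar k (- lam / of_nat (2 * k * D)) (Psi n)
                 = (\<lambda>z. exp (\<i> * of_real pi * of_int n / of_nat (k * D)) * Psi n z)"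
  shows "\<exists>d. theta k lam (of_nat D * mu) = (\<lambda>z. d * Psi 0 z)"
proof -
  have lam: "lam \<noteq> 0" by (rule basis_lam_nonzero[OF basis])
  have A: "omega lam (of_nat D * mu) = - 4 * pi * real D" by (rule omega_lam_Dmu[OF basis])
  have An: "omega lam (of_nat D * mu) \<noteq> 0" using A D by simp
  have GH: "theta k lam (of_nat D * mu) \<in> Hspace k (of_nat D * mu) lam"
    unfolding Hspace_def using theta_hol_sec[OF lam k An] theta_lattice_inv[OF lam k D A] by blast
  have "of_nat 1 * (- lam / of_nat (2 * k * D)) = of_real (of_int (- 1) / real (2 * k * D)) * lam"
    by simp
  then have GS: "Tstar k (of_nat 1 * (- lam / of_nat (2 * k * D))) (theta k lam (of_nat D * mu))
      = theta k lam (of_nat D * mu)"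
    using theta_lam_inv[OF lam k D A, of "- 1"] by (simp only:)
  have kD: "0 < k * D" "k * D = k * D * 1" using k D by simp_all
  obtain c where "theta k lam (of_nat D * mu) = (\<lambda>z. \<Sum>m\<in>{0..<int 1}. c m * Psi (2 * int (k * D) * m) z)"
    using onb_invariant_modes[OF kD(1) zero_less_one kD(2) Psi_onb Psi_S GH GS] by (elim exE)
  moreover have "{0..<int 1} = {0}" by auto
  ultimately have "theta k lam (of_nat D * mu) = (\<lambda>z. c 0 * Psi 0 z)" by simp
  then show ?thesis by (rule exI)
qed

text \<open>For 0 < j < D the points n D mu + j mu stay away from the line of lam, which
  makes every term of the series at j mu exponentially small.\<close>
lemma lattice_offset_bound:
  fixes n j :: int and D :: nat
  assumes j1: "1 \<le> j" and jD: "j < int D"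
  shows "real (max 1 (nat \<bar>n\<bar>)) \<le> (real_of_int (n * int D + j))^2"
proof -
  define m where "m = n * int D + j"
  have D1: "1 \<le> int D" using j1 jD by simp
  have ii: "1 \<le> \<bar>m\<bar> \<and> \<bar>n\<bar> \<le> \<bar>m\<bar>"
  proof (cases "n \<ge> 0")
    case True
    have "n * 1 \<le> n * int D" using True D1 by (intro mult_left_mono) auto
    then show ?thesis using True j1 unfolding m_def by linarith
  next
    case False
    have "(- n - 1) * 1 \<le> (- n - 1) * int D" using False D1 by (intro mult_left_mono) auto
    then show ?thesis using False j1 jD unfolding m_def by (simp add: algebra_simps)
  qed
  have "max 1 (nat \<bar>n\<bar>) \<le> nat \<bar>m\<bar>" using ii by (auto simp: max_def)
  then have "real (max 1 (nat \<bar>n\<bar>)) \<le> real_of_int \<bar>m\<bar>" by linarith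
  also have "\<dots> \<le> (real_of_int m)^2" by (rule sq_ge_abs_int)
  finally show ?thesis by (simp add: m_def)
qed

lemma theta_bound_off_origin:
  fixes j :: int
  assumes k: "0 < k" and basis: "omega mu lam = 4 * pi"
    and j1: "1 \<le> j" and jD: "j < int D"
  defines "r \<equiv> exp (- 8 * pi^2 * real k / (cmod lam)^2)"
  shows "cmod (theta k lam (of_nat D * mu) (of_int j * mu)) \<le> r + 2 * r / (1 - r)"
proof -
  define nu where "nu = of_nat D * mu"
  define L where "L = (cmod lam)^2"
  define c where "c = 8 * pi^2 * real k / L"
  have D: "0 < D" using j1 jD by simp
  have lam: "lam \<noteq> 0" by (rule basis_lam_nonzero[OF basis])
  have L: "L > 0" using lam by (simp add: L_def)
  have c: "c > 0" using L k by (simp add: c_def)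
  have r: "r = exp (- c)" by (simp add: r_def c_def L_def)
  have r0: "0 \<le> r" and r1: "r < 1" using c by (auto simp: r)
  have A: "omega lam nu = - 4 * pi * real D" unfolding nu_def by (rule omega_lam_Dmu[OF basis])
  have An: "omega lam nu \<noteq> 0" using A D by simp
  have ol: "omega lam mu = - 4 * pi" using basis omega_swap[of lam mu] by simp
  have w: "omega lam (of_int j * mu) = - 4 * pi * of_int j" by (simp add: omega_int_right ol)
  have bnd: "cmod (theta_term k lam nu n (of_int j * mu)) \<le> r ^ max 1 (nat \<bar>n\<bar>)" for n
  proof -
    have "cmod (theta_term k lam nu n (of_int j * mu)) = exp (- (real k / 2) * (of_int n * omega lam nu + omega lam (of_int j * mu))^2 / L)"
      by (simp add: norm_theta_term[OF lam] L_def)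
    also have "- (real k / 2) * (of_int n * omega lam nu + omega lam (of_int j * mu))^2 / L = - c * (real_of_int (n * int D + j))^2"
      unfolding A w c_def using L by (simp add: field_simps power2_eq_square)
    also have "exp (- c * (real_of_int (n * int D + j))^2) \<le> exp (- c * real (max 1 (nat \<bar>n\<bar>)))"
      using lattice_offset_bound[OF j1 jD, of n] c by (simp add: mult_left_mono)
    also have "\<dots> = r ^ max 1 (nat \<bar>n\<bar>)"
      by (simp add: r exp_of_nat_mult[symmetric] mult.commute)
    finally show ?thesis .
  qed
  have "cmod (theta k lam nu (of_int j * mu)) \<le> r + 2 * r / (1 - r)"
    by (rule norm_infsum_le[OF theta_has_sum[OF lam k An] geom_all_max[OF r0 r1]]) (rule bnd)
  then show ?thesis by (simp add: nu_def)
qed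

text \<open>At the origin only the term n = 0, which equals 1, is not exponentially small.\<close>
lemma theta_bound_origin:
  assumes k: "0 < k" and basis: "omega mu lam = 4 * pi" and D: "0 < D"
  defines "r \<equiv> exp (- 8 * pi^2 * real k / (cmod lam)^2)"
  shows "cmod (theta k lam (of_nat D * mu) 0 - 1) \<le> 2 * r / (1 - r)"
proof -
  define nu where "nu = of_nat D * mu"
  define L where "L = (cmod lam)^2"
  define c where "c = 8 * pi^2 * real k / L"
  have lam: "lam \<noteq> 0" by (rule basis_lam_nonzero[OF basis])
  have L: "L > 0" using lam by (simp add: L_def)
  have c: "c > 0" using L k by (simp add: c_def)
  have r: "r = exp (- c)" by (simp add: r_def c_def L_def)
  have r0: "0 \<le> r" and r1: "r < 1" using c by (auto simp: r)
  have A: "omega lam nu = - 4 * pi * real D" unfolding nu_def by (rule omega_lam_Dmu[OF basis])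
  have An: "omega lam nu \<noteq> 0" using A D by simp
  have t0: "theta_term k lam nu 0 0 = 1" by (simp add: theta_term_def Tstar_def gauss_def)
  have hsU: "((\<lambda>n. theta_term k lam nu n 0) has_sum theta k lam nu 0) UNIV"
    by (rule theta_has_sum[OF lam k An])
  have "(\<lambda>n. theta_term k lam nu n 0) summable_on (UNIV - {0})"
    by (rule summable_on_subset_banach[OF theta_term_summable[OF lam k An]]) auto
  then obtain T where hsT: "((\<lambda>n. theta_term k lam nu n 0) has_sum T) (UNIV - {0})"
    by (auto simp: summable_on_def)
  have "((\<lambda>n. theta_term k lam nu n 0) has_sum (theta_term k lam nu 0 0 + T)) (insert 0 (UNIV - {0}))"
    by (rule has_sum_insert[OF _ hsT]) auto
  then have "((\<lambda>n. theta_term k lam nu n 0) has_sum (1 + T)) UNIV" by (simp add: t0 insert_Diff_if)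
  then have GT: "theta k lam nu 0 = 1 + T" using hsU has_sum_unique by blast
  have bnd: "cmod (theta_term k lam nu n 0) \<le> r ^ nat \<bar>n\<bar>" for n
  proof -
    have D1: "1 \<le> real D" using D by simp
    have "real_of_int \<bar>n\<bar> \<le> (real_of_int n)^2" by (rule sq_ge_abs_int)
    also have "\<dots> \<le> (real D)^2 * (real_of_int n)^2"
      using mult_right_mono[OF one_le_power[OF D1, of 2], of "(real_of_int n)^2"] by simp
    finally have nn: "real (nat \<bar>n\<bar>) \<le> (real D)^2 * (real_of_int n)^2" by simp
    have "cmod (theta_term k lam nu n 0) = exp (- (real k / 2) * (of_int n * omega lam nu + omega lam 0)^2 / L)"
      by (simp add: norm_theta_term[OF lam] L_def)
    also have "- (real k / 2) * (of_int n * omega lam nu + omega lam 0)^2 / L = - c * ((real D)^2 * (real_of_int n)^2)"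
      unfolding A c_def using L by (simp add: field_simps power2_eq_square)
    also have "exp (- c * ((real D)^2 * (real_of_int n)^2)) \<le> exp (- c * real (nat \<bar>n\<bar>))"
      using nn c by (simp add: mult_left_mono)
    also have "\<dots> = r ^ nat \<bar>n\<bar>"
      by (simp add: r exp_of_nat_mult[symmetric] mult.commute)
    finally show ?thesis .
  qed
  have "cmod T \<le> 2 * r / (1 - r)"
    by (rule norm_infsum_le[OF hsT geom_nz[OF r0 r1]]) (rule bnd)
  then show ?thesis using GT by (simp add: nu_def)
qed


lemma proportional_sum_ratio:
  fixes G P :: "complex \<Rightarrow> complex" and x :: "'a \<Rightarrow> complex"
  assumes G: "G = (\<lambda>z. d * P z)" and G0: "1/2 \<le> cmod (G 0)"
    and bound: "\<And>j. j \<in> J \<Longrightarrow> cmod (G (x j)) \<le> delta"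
  shows "(\<Sum>j\<in>J. P (x j)) = P 0 * (\<Sum>j\<in>J. G (x j) / G 0)"
    and "cmod (\<Sum>j\<in>J. G (x j) / G 0) \<le> real (card J) * (2 * delta)"
proof -
  have G0_nz: "G 0 \<noteq> 0" using G0 by auto
  then have d: "d \<noteq> 0" using G by auto
  show "(\<Sum>j\<in>J. P (x j)) = P 0 * (\<Sum>j\<in>J. G (x j) / G 0)"
    using G0_nz d unfolding G by (simp add: sum_distrib_left)
  have "cmod (\<Sum>j\<in>J. G (x j) / G 0) \<le> (\<Sum>j\<in>J. cmod (G (x j)) / cmod (G 0))"
    using norm_sum[of "\<lambda>j. G (x j) / G 0" J] by (simp add: norm_divide)
  also have "\<dots> \<le> (\<Sum>j\<in>J. delta / (1/2))"
    using bound G0 by (intro sum_mono frac_le) (auto intro: order_trans[OF norm_ge_zero])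
  finally show "cmod (\<Sum>j\<in>J. G (x j) / G 0) \<le> real (card J) * (2 * delta)" by simp
qed

lemma orbit_sum_origin_fixed_k:
  fixes Psi :: "int \<Rightarrow> complex \<Rightarrow> complex"
  assumes k: "0 < k" and D: "0 < D"
    and basis: "omega mu lam = 4 * pi"
    and Psi_onb: "is_onb (Hspace k (of_nat D * mu) lam) (of_nat D * mu) lam (2 * k * D) Psi"
    and Psi_S: "\<And>n. Tstar k (- lam / of_nat (2 * k * D)) (Psi n)
                 = (\<lambda>z. exp (\<i> * of_real pi * of_int n / of_nat (k * D)) * Psi n z)"
    and small: "exp (- 8 * pi^2 * real k / (cmod lam)^2) \<le> 1/48"
  shows "\<exists>sig. orbit_sum k D mu (Psi 0) 0 = Psi 0 0 * (1 + sig)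
            \<and> cmod sig \<le> 8 * real D * exp (- 8 * pi^2 * real k / (cmod lam)^2)"
proof -
  define rr where "rr = exp (- 8 * pi^2 * real k / (cmod lam)^2)"
  define G where "G = theta k lam (of_nat D * mu)"
  obtain d where d: "G = (\<lambda>z. d * Psi 0 z)"
    using theta_multiple_Psi0[OF k D basis Psi_onb Psi_S] unfolding G_def by blast
  have rr0: "0 \<le> rr" and rr1: "rr \<le> 1/48" using small by (simp_all add: rr_def)
  have geom_le: "2 * rr / (1 - rr) \<le> 3 * rr"
  proof -
    have "rr * (3 * rr) \<le> rr * 1" using rr0 rr1 by (intro mult_left_mono) auto
    then show ?thesis using rr1 by (simp add: divide_le_eq algebra_simps)
  qed
  have "cmod (G 0 - 1) \<le> 3 * rr"
    using theta_bound_origin[OF k basis D] geom_le by (simp add: G_def rr_def)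
  then have G0: "1/2 \<le> cmod (G 0)"
    using norm_triangle_ineq2[of 1 "1 - G 0"] rr1 by (simp add: norm_minus_commute)
  have Gj: "cmod (G (of_int j * mu)) \<le> 4 * rr" if "j \<in> {1..<int D}" for j
    using theta_bound_off_origin[OF k basis, of j D] that geom_le by (simp add: G_def rr_def)
  define sig where "sig = (\<Sum>j\<in>{1..<int D}. G (of_int j * mu) / G 0)"
  have "orbit_sum k D mu (Psi 0) 0 = Psi 0 0 + (\<Sum>j\<in>{1..<int D}. Psi 0 (of_int j * mu))"
  proof -
    have "{0..<int D} = insert 0 {1..<int D}" using D by auto
    then show ?thesis by (simp add: orbit_sum_def Tstar_at0)
  qed
  also have "\<dots> = Psi 0 0 * (1 + sig)"
    using proportional_sum_ratio(1)[where J = "{1..<int D}" and x = "\<lambda>j. of_int j * mu", OF d G0 Gj]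
    by (simp add: sig_def algebra_simps)
  finally have eq: "orbit_sum k D mu (Psi 0) 0 = Psi 0 0 * (1 + sig)" .
  have "cmod sig \<le> real (card {1..<int D}) * (2 * (4 * rr))"
    unfolding sig_def
    by (rule proportional_sum_ratio(2)[where J = "{1..<int D}" and x = "\<lambda>j. of_int j * mu", OF d G0 Gj])
  also have "\<dots> \<le> real D * (2 * (4 * rr))" using rr0 by (intro mult_right_mono) auto
  also have "\<dots> = 8 * real D * rr" by simp
  finally show ?thesis using eq unfolding rr_def by blast
qed

section \<open>Asymptotics\<close>

lemma O_inf_dominated:
  assumes f: "O_inf f" and C: "0 \<le> C"
    and le: "\<forall>\<^sub>F k in sequentially. cmod (g k) \<le> C * cmod (f k)"
  shows "O_inf g"
  unfolding O_inf_def
proof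
  fix N :: nat
  obtain Cf where Cf: "\<forall>\<^sub>F k in sequentially. cmod (f k) \<le> Cf * real k powr (- real N)"
    using f unfolding O_inf_def by blast
  have "\<forall>\<^sub>F k in sequentially. cmod (g k) \<le> (C * Cf) * real k powr (- real N)"
    using Cf le
  proof eventually_elim
    case (elim k)
    then show ?case using mult_left_mono[OF elim(1) C] by simp
  qed
  then show "\<exists>C. \<forall>\<^sub>F k in sequentially. cmod (g k) \<le> C * real k powr (- real N)" by blast
qed

lemma O_inf_add:
  assumes f: "O_inf f" and g: "O_inf g"
  shows "O_inf (\<lambda>k. f k + g k)"
  unfolding O_inf_def
proof
  fix N :: nat
  obtain Cf where Cf: "\<forall>\<^sub>F k in sequentially. cmod (f k) \<le> Cf * real k powr (- real N)"
    using f unfolding O_inf_def by blast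
  obtain Cg where Cg: "\<forall>\<^sub>F k in sequentially. cmod (g k) \<le> Cg * real k powr (- real N)"
    using g unfolding O_inf_def by blast
  have "\<forall>\<^sub>F k in sequentially. cmod (f k + g k) \<le> (Cf + Cg) * real k powr (- real N)"
    using Cf Cg
  proof eventually_elim
    case (elim k)
    then show ?case using norm_triangle_ineq[of "f k" "g k"] by (simp add: algebra_simps)
  qed
  then show "\<exists>C. \<forall>\<^sub>F k in sequentially. cmod (f k + g k) \<le> C * real k powr (- real N)" by blast
qed

lemma O_inf_norm: "O_inf f \<Longrightarrow> O_inf (\<lambda>k. complex_of_real (cmod (f k)))"
  by (simp add: O_inf_def)

lemma exp_ge_pow:
  fixes x :: real assumes x: "0 \<le> x" and M: "0 < M"
  shows "(x / real M) ^ M \<le> exp x"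
proof -
  have "(x / real M) ^ M \<le> exp (x / real M) ^ M"
    using x M by (intro power_mono) (auto intro: order_trans[OF _ exp_ge_add_one_self])
  also have "\<dots> = exp x" using M by (simp add: exp_of_nat_mult[symmetric])
  finally show ?thesis .
qed

lemma O_inf_exp:
  assumes c: "c > 0"
  shows "O_inf (\<lambda>k. complex_of_real (exp (- c * real k)))"
  unfolding O_inf_def
proof
  fix N :: nat
  define M where "M = Suc N"
  have "\<forall>\<^sub>F k in sequentially. cmod (complex_of_real (exp (- c * real k))) \<le> (real M / c) ^ M * real k powr (- real N)"
    using eventually_ge_at_top[of 1]
  proof eventually_elim
    case (elim k)
    have k1: "1 \<le> real k" using elim by simp
    have kp: "0 < real k" using k1 by simp
    have pos: "0 < (c * real k / real M) ^ M" using c kp by (simp add: M_def)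
    have "exp (- c * real k) = 1 / exp (c * real k)" by (simp add: exp_minus field_simps)
    also have "\<dots> \<le> 1 / (c * real k / real M) ^ M"
      using exp_ge_pow[of "c * real k" M] c kp pos by (intro divide_left_mono) (auto simp: M_def)
    also have "\<dots> = (real M / c) ^ M / real k ^ M"
      using c kp by (simp add: power_divide power_mult_distrib field_simps)
    also have "\<dots> \<le> (real M / c) ^ M / real k ^ N"
    proof (rule divide_left_mono)
      show "real k ^ N \<le> real k ^ M" using k1 by (intro power_increasing) (auto simp: M_def)
    qed (use c kp in auto)
    also have "\<dots> = (real M / c) ^ M * real k powr (- real N)"
      using kp by (simp add: powr_minus powr_realpow divide_inverse)
    finally show ?case by simp
  qed
  then show "\<exists>C. \<forall>\<^sub>F k in sequentially. cmod (complex_of_real (exp (- c * real k))) \<le> C * real k powr (- real N)" by blast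
qed

lemma O_inf_tendsto0:
  assumes "O_inf f" shows "f \<longlonglongrightarrow> 0"
proof -
  obtain C where C: "\<forall>\<^sub>F k in sequentially. cmod (f k) \<le> C * real k powr (- real 1)"
    using assms unfolding O_inf_def by blast
  have "(\<lambda>k. C * real k powr (- real 1)) \<longlonglongrightarrow> C * 0"
    by (intro tendsto_mult tendsto_const tendsto_neg_powr filterlim_real_sequentially) auto
  then have "(\<lambda>k. C * real k powr (- real 1)) \<longlonglongrightarrow> 0" by simp
  then show ?thesis
    by (rule Lim_null_comparison[OF C])
qed

lemma exp_three_quarter_pi: "exp (3 * \<i> * of_real pi / 4) = \<i> * exp (\<i> * of_real pi / 4)"
proof -
  have "exp (3 * \<i> * of_real pi / 4) = exp (\<i> * of_real (pi / 2) + \<i> * of_real pi / 4)"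
    by (simp add: field_simps)
  also have "\<dots> = \<i> * exp (\<i> * of_real pi / 4)"
    by (simp only: exp_add cis_conv_exp[symmetric] cis_pi_half)
  finally show ?thesis .
qed

lemma coefficient_estimate:
  fixes B P Z E1 E2 sig Om :: complex and kap :: real
  defines "M \<equiv> exp (\<i> * of_real pi / 4) * of_real kap * Om"
  assumes Z_eq: "Z = B * (P * (1 + sig))"
    and P: "P = M + E1" and Z: "Z = \<i> / of_real (sqrt 2) * M + E2"
    and sig: "cmod sig \<le> 1/2" and E1: "cmod E1 \<le> kap * cmod Om / 2"
    and kap: "kap > 0" and Om: "Om \<noteq> 0"
  shows "cmod (B - \<i> / of_real (sqrt 2)) \<le> 4 * (cmod E2 + 2 * cmod E1) / (kap * cmod Om) + 4 * cmod sig"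
proof -
  define K where "K = kap * cmod Om"
  have K: "K > 0" using kap Om by (simp add: K_def)
  have M: "cmod M = K"
    using kap by (simp add: M_def K_def norm_mult norm_exp_i_times[of "pi / 4", simplified])
  have i2: "cmod (\<i> / of_real (sqrt 2)) \<le> 1" by (simp add: norm_divide)
  have "K / 4 \<le> cmod P * cmod (1 + sig)"
  proof -
    have "K / 2 \<le> cmod P" using norm_triangle_ineq2[of M "- E1"] M E1 by (simp add: P K_def)
    moreover have "1/2 \<le> cmod (1 + sig)" using norm_triangle_ineq2[of 1 "- sig"] sig by simp
    ultimately show ?thesis using mult_mono[of "K / 2" "cmod P" "1/2" "cmod (1 + sig)"] K by simp
  qed
  then have den: "K / 4 \<le> cmod (P * (1 + sig))" by (simp add: norm_mult)
  have key: "(B - \<i> / of_real (sqrt 2)) * (P * (1 + sig))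
      = E2 - \<i> / of_real (sqrt 2) * (M * sig + E1 * (1 + sig))"
    using Z_eq unfolding P Z by (simp add: algebra_simps)
  have "cmod (M * sig + E1 * (1 + sig)) \<le> K * cmod sig + cmod E1 * 2"
  proof -
    have "cmod (1 + sig) \<le> 2" using norm_triangle_ineq[of 1 sig] sig by simp
    then have "cmod (E1 * (1 + sig)) \<le> cmod E1 * 2" by (simp add: norm_mult mult_left_mono)
    then show ?thesis using norm_triangle_ineq[of "M * sig" "E1 * (1 + sig)"] M by (simp add: norm_mult)
  qed
  moreover have "cmod (\<i> / of_real (sqrt 2) * (M * sig + E1 * (1 + sig))) \<le> cmod (M * sig + E1 * (1 + sig))"
    unfolding norm_mult using i2 by (rule mult_left_le_one_le[OF norm_ge_zero norm_ge_zero])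
  ultimately have num: "cmod ((B - \<i> / of_real (sqrt 2)) * (P * (1 + sig))) \<le> cmod E2 + K * cmod sig + 2 * cmod E1"
    unfolding key using norm_triangle_ineq4[of E2 "\<i> / of_real (sqrt 2) * (M * sig + E1 * (1 + sig))"]
    by linarith
  have "cmod (B - \<i> / of_real (sqrt 2)) * (K / 4) \<le> cmod E2 + K * cmod sig + 2 * cmod E1"
    using mult_left_mono[OF den norm_ge_zero, of "B - \<i> / of_real (sqrt 2)"] num by (simp add: norm_mult)
  then have "cmod (B - \<i> / of_real (sqrt 2)) \<le> (cmod E2 + K * cmod sig + 2 * cmod E1) / (K / 4)"
    using K by (simp add: field_simps)
  also have "\<dots> = 4 * (cmod E2 + 2 * cmod E1) / K + 4 * cmod sig"
    using K by (simp add: field_simps)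
  finally show ?thesis by (simp add: K_def)
qed

lemma coefficient_estimate_uniform:
  fixes B P Z E1 E2 sig Om :: complex and kap K0 :: real
  defines "M \<equiv> exp (\<i> * of_real pi / 4) * of_real kap * Om"
  assumes Z_eq: "Z = B * (P * (1 + sig))"
    and P: "P = M + E1" and Z: "Z = \<i> / of_real (sqrt 2) * M + E2"
    and sig: "cmod sig \<le> 1/2" and E1: "cmod E1 \<le> K0 / 2"
    and K0: "0 < K0" "K0 \<le> kap * cmod Om"
  shows "cmod (B - \<i> / of_real (sqrt 2)) \<le> (8 / K0 + 4) * (cmod E2 + cmod E1 + cmod sig)"
proof -
  have kap_Om: "0 < kap * cmod Om" using K0 by linarith
  then have kap: "0 < kap" and Om: "Om \<noteq> 0" by (auto simp: zero_less_mult_iff)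
  have "cmod (B - \<i> / of_real (sqrt 2)) \<le> 4 * (cmod E2 + 2 * cmod E1) / (kap * cmod Om) + 4 * cmod sig"
    using E1 K0 by (intro coefficient_estimate[OF Z_eq P[unfolded M_def] Z[unfolded M_def] sig _ kap Om]) simp
  also have "4 * (cmod E2 + 2 * cmod E1) / (kap * cmod Om) \<le> 4 * (cmod E2 + 2 * cmod E1) / K0"
    using K0 kap_Om by (intro divide_left_mono) auto
  also have "4 * (cmod E2 + 2 * cmod E1) / K0 + 4 * cmod sig \<le> (8 / K0 + 4) * (cmod E2 + cmod E1 + cmod sig)"
  proof -
    have "4 * (cmod E2 + 2 * cmod E1) / K0 \<le> 8 / K0 * (cmod E2 + cmod E1 + cmod sig)"
      using K0 by (simp add: field_simps)
    moreover have "4 * cmod sig \<le> 4 * (cmod E2 + cmod E1 + cmod sig)" by simp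
    ultimately show ?thesis by (simp only: distrib_right)
  qed
  finally show ?thesis by simp
qed

lemma coefficient_asymptotics:
  fixes B P Z sig :: "nat \<Rightarrow> complex" and Om :: complex
  assumes Om: "Om \<noteq> 0"
    and Z_eq: "\<forall>\<^sub>F k in sequentially. Z k = B k * (P k * (1 + sig k))"
    and sig: "O_inf sig"
    and P: "O_inf (\<lambda>k. P k - exp (\<i> * of_real pi / 4) * of_real ((real k / (2 * pi)) powr (1 / 4)) * Om)"
    and Z: "O_inf (\<lambda>k. Z k - exp (3 * \<i> * of_real pi / 4) / of_real (sqrt 2)
                               * of_real ((real k / (2 * pi)) powr (1 / 4)) * Om)"
  shows "O_inf (\<lambda>k. B k - \<i> / of_real (sqrt 2))"
proof -
  define kap where "kap k = (real k / (2 * pi)) powr (1 / 4)" for k :: nat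
  define kap1 where "kap1 = (1 / (2 * pi)) powr (1 / 4 :: real)"
  define E1 where "E1 k = P k - exp (\<i> * of_real pi / 4) * of_real (kap k) * Om" for k
  define E2 where "E2 k = Z k - \<i> / of_real (sqrt 2) * (exp (\<i> * of_real pi / 4) * of_real (kap k) * Om)" for k
  define C where "C = 8 / (kap1 * cmod Om) + 4"
  have K1: "0 < kap1 * cmod Om" using Om by (simp add: kap1_def)
  have E1_small: "O_inf E1" using P by (simp add: E1_def[abs_def] kap_def)
  have lead: "exp (3 * \<i> * of_real pi / 4) / of_real (sqrt 2) * of_real (kap k) * Om
      = \<i> / of_real (sqrt 2) * (exp (\<i> * of_real pi / 4) * of_real (kap k) * Om)" for k
    unfolding exp_three_quarter_pi by simp
  have E2_small: "O_inf E2"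
    using Z unfolding E2_def[abs_def] lead[symmetric] unfolding kap_def .
  have small: "\<forall>\<^sub>F k in sequentially. cmod (E1 k) < kap1 * cmod Om / 2 \<and> cmod (sig k) < 1/2"
    using order_tendstoD(2)[OF tendsto_norm_zero[OF O_inf_tendsto0[OF E1_small]], of "kap1 * cmod Om / 2"]
      order_tendstoD(2)[OF tendsto_norm_zero[OF O_inf_tendsto0[OF sig]], of "1/2"] K1
    by (auto intro: eventually_conj)
  have "\<forall>\<^sub>F k in sequentially. cmod (B k - \<i> / of_real (sqrt 2))
      \<le> C * cmod (complex_of_real (cmod (E2 k) + cmod (E1 k) + cmod (sig k)))"
    using Z_eq small eventually_ge_at_top[of 1]
  proof eventually_elim
    case (elim k)
    have "kap1 \<le> kap k"
      unfolding kap_def kap1_def using elim(3) by (intro powr_mono2) (auto simp: divide_right_mono)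
    then have kap_le: "kap1 * cmod Om \<le> kap k * cmod Om" by (rule mult_right_mono) simp
    have E1_le: "cmod (E1 k) \<le> kap1 * cmod Om / 2" and sig_le: "cmod (sig k) \<le> 1/2"
      using elim(2) by simp_all
    have "cmod (B k - \<i> / of_real (sqrt 2)) \<le> C * (cmod (E2 k) + cmod (E1 k) + cmod (sig k))"
      unfolding C_def
      by (rule coefficient_estimate_uniform[OF elim(1) _ _ sig_le E1_le K1 kap_le]) (simp_all add: E1_def E2_def)
    moreover have "cmod (complex_of_real (cmod (E2 k) + cmod (E1 k) + cmod (sig k)))
        = cmod (E2 k) + cmod (E1 k) + cmod (sig k)"
      unfolding norm_of_real by simp
    ultimately show ?case by simp
  qed
  moreover have "O_inf (\<lambda>k. complex_of_real (cmod (E2 k) + cmod (E1 k) + cmod (sig k)))"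
    unfolding of_real_add by (intro O_inf_add O_inf_norm E1_small E2_small sig)
  ultimately show ?thesis
    by (rule O_inf_dominated[rotated 2]) (use K1 in \<open>simp add: C_def\<close>)
qed

lemma orbit_sum_origin_asymptotics:
  fixes Psi :: "nat \<Rightarrow> int \<Rightarrow> complex \<Rightarrow> complex"
  assumes D: "0 < D"
    and basis: "omega mu lam = 4 * pi"
    and Psi_onb: "\<And>k. 0 < k \<Longrightarrow> is_onb (Hspace k (of_nat D * mu) lam) (of_nat D * mu) lam (2 * k * D) (Psi k)"
    and Psi_S: "\<And>k n. 0 < k \<Longrightarrow> Tstar k (- lam / of_nat (2 * k * D)) (Psi k n)
                 = (\<lambda>z. exp (\<i> * of_real pi * of_int n / of_nat (k * D)) * Psi k n z)"
  shows "\<exists>sig. O_inf sig \<and>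
           (\<forall>\<^sub>F k in sequentially. orbit_sum k D mu (Psi k 0) 0 = Psi k 0 0 * (1 + sig k))"
proof -
  define c where "c = 8 * pi^2 / (cmod lam)^2"
  have c: "0 < c" using basis_lam_nonzero[OF basis] by (simp add: c_def)
  define good where "good k s \<longleftrightarrow> orbit_sum k D mu (Psi k 0) 0 = Psi k 0 0 * (1 + s)
                                    \<and> cmod s \<le> 8 * real D * exp (- c * real k)" for k s
  define sig where "sig k = (SOME s. good k s)" for k
  have decay: "O_inf (\<lambda>k. complex_of_real (exp (- c * real k)))" by (rule O_inf_exp[OF c])
  have "\<forall>\<^sub>F k in sequentially. cmod (complex_of_real (exp (- c * real k))) < 1/48"
    using order_tendstoD(2)[OF tendsto_norm_zero[OF O_inf_tendsto0[OF decay]], of "1/48"] by simp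
  then have good: "\<forall>\<^sub>F k in sequentially. good k (sig k)"
    using eventually_gt_at_top[of 0]
  proof eventually_elim
    case (elim k)
    have "exp (- 8 * pi^2 * real k / (cmod lam)^2) \<le> 1/48"
      using elim(1) by (simp add: c_def)
    then have "\<exists>s. good k s"
      using orbit_sum_origin_fixed_k[OF elim(2) D basis Psi_onb[OF elim(2)] Psi_S[OF elim(2)]]
      by (simp add: good_def c_def)
    then show ?case unfolding sig_def by (rule someI_ex)
  qed
  have "O_inf sig"
    by (rule O_inf_dominated[OF decay, of "8 * real D"]) (use good in \<open>auto simp: good_def elim: eventually_mono\<close>)
  moreover have "\<forall>\<^sub>F k in sequentially. orbit_sum k D mu (Psi k 0) 0 = Psi k 0 0 * (1 + sig k)"
    using good by (auto simp: good_def elim: eventually_mono)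
  ultimately show ?thesis by blast
qed

theorem mainTheorem5:
  fixes a b :: nat and lam mu Om_mu Om_lam :: complex
    and xi :: "nat \<Rightarrow> int \<Rightarrow> complex \<Rightarrow> complex"
    and Psi :: "nat \<Rightarrow> int \<Rightarrow> complex \<Rightarrow> complex"
    and Z0 :: "nat \<Rightarrow> complex \<Rightarrow> complex"
    and D :: nat
  assumes ab: "0 < a" "0 < b" "coprime a b"
    and D_def: "D = 2 * a * b"
    and basis: "omega mu lam = 4 * pi"
    and Om_mu: "phi_sq Om_mu mu = 1"
    and Om_lam: "phi_sq Om_lam lam = 1"
    and xi_onb: "\<And>k. 0 < k \<Longrightarrow> is_onb (Hspace k lam mu) lam mu (2 * k) (xi k)"
    and xi_M: "\<And>k l. 0 < k \<Longrightarrow> Tstar k (mu / of_nat (2 * k)) (xi k l)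
                 = (\<lambda>z. exp (\<i> * of_real pi * of_int l / of_nat k) * xi k l z)"
    and xi_L: "\<And>k l. 0 < k \<Longrightarrow> Tstar k (- lam / of_nat (2 * k)) (xi k l) = xi k (l - 1)"
    and xi_0: "\<And>k. 0 < k \<Longrightarrow> \<exists>r>0. xi k 0 0 = of_real r * Om_mu"
    and Z0_def: "\<And>k. Z0 k = (\<lambda>z. - \<i> / of_real (2 * sqrt (real k)) * (\<Sum>l\<in>{0..<int (2 * k)}. xi k l z))"
    and Om_lam_sign: "O_inf (\<lambda>k. Z0 k 0 - exp (3 * \<i> * of_real pi / 4) / of_real (sqrt 2)
                          * of_real ((real k / (2 * pi)) powr (1 / 4)) * Om_lam)"
    and Psi_onb: "\<And>k. 0 < k \<Longrightarrow> is_onb (Hspace k (of_nat D * mu) lam) (of_nat D * mu) lam (2 * k * D) (Psi k)"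
    and Psi_S: "\<And>k n. 0 < k \<Longrightarrow> Tstar k (- lam / of_nat (2 * k * D)) (Psi k n)
                 = (\<lambda>z. exp (\<i> * of_real pi * of_int n / of_nat (k * D)) * Psi k n z)"
    and Psi_R: "\<And>k n. 0 < k \<Longrightarrow> Tstar k ((of_nat D * mu - 2 * lam) / of_nat (2 * k * D)) (Psi k n)
                 = Psi k (n + 1)"
    and Psi_0: "O_inf (\<lambda>k. Psi k 0 0 - exp (\<i> * of_real pi / 4)
                          * of_real ((real k / (2 * pi)) powr (1 / 4)) * Om_lam)"
  shows "\<exists>alpha :: nat \<Rightarrow> int \<Rightarrow> complex.
           (\<forall>k>0. Z0 k = (\<lambda>z. \<Sum>m\<in>{0..<int D}. alpha k m * Psi k (2 * int k * m) z))
           \<and> O_inf (\<lambda>k. alpha k 0 - \<i> / of_real (sqrt 2))"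
proof -
  have D: "0 < D" using ab D_def by simp
  obtain B where B: "\<forall>k>0. Z0 k = (\<lambda>z. B k * orbit_sum k D mu (Psi k 0) z)"
    using knot_state_expansion[OF D basis xi_onb xi_L Z0_def Psi_onb Psi_S Psi_R] by blast
  define alpha where "alpha k m = B k * exp (- (4 * of_real pi * \<i> * of_nat k * of_int m ^ 2 / of_nat D))"
    for k :: nat and m :: int
  have expansion: "\<forall>k>0. Z0 k = (\<lambda>z. \<Sum>m\<in>{0..<int D}. alpha k m * Psi k (2 * int k * m) z)"
  proof (intro allI impI ext)
    fix k :: nat and z assume k: "0 < k"
    show "Z0 k z = (\<Sum>m\<in>{0..<int D}. alpha k m * Psi k (2 * int k * m) z)"
      using B k orbit_sum_Psi0[OF k D basis Psi_S[OF k] Psi_R[OF k], of z]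
      by (simp add: alpha_def sum_distrib_left mult.assoc)
  qed
  obtain sig where sig: "O_inf sig"
    and orbit: "\<forall>\<^sub>F k in sequentially. orbit_sum k D mu (Psi k 0) 0 = Psi k 0 0 * (1 + sig k)"
    using orbit_sum_origin_asymptotics[OF D basis Psi_onb Psi_S] by blast
  have "\<forall>\<^sub>F k in sequentially. Z0 k 0 = B k * (Psi k 0 0 * (1 + sig k))"
    using orbit eventually_gt_at_top[of 0] by eventually_elim (simp add: B)
  moreover have "Om_lam \<noteq> 0" using Om_lam by (auto simp: phi_sq_def)
  ultimately have "O_inf (\<lambda>k. B k - \<i> / of_real (sqrt 2))"
    using coefficient_asymptotics[OF _ _ sig Psi_0 Om_lam_sign] by blast
  then show ?thesis using expansion by (intro exI[of _ alpha]) (simp add: alpha_def)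
qed

end
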